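(* Let $\mu$ and $\nu$ be nice functions on $\mathbb{R}$, let $\mathcal{P}^n$ be a subfamily of the sub-spherical family $\mathcal{P}^n_\mu$, and let $\mathcal{P}^m$ be a completely monotone subfamily of the sub-spherical family $\mathcal{P}^m_\nu$. Let $A$ be an $r\times n$ matrix, $B$ an $r\times m$ matrix and $\Theta$ a positive definite $r\times r$ matrix such that $$\Theta^2\succeq AA^T,\quad \Theta^2\succeq BB^T,\quad AA^T+BB^T\succ 0.$$ Consider random vectors $\xi=\Theta^{-1}[A\eta+B\zeta]$, where $\eta\sim p\in\mathcal{P}^n$ and $\zeta\sim q\in\mathcal{P}^m$ are independent, and let $\gamma(s)=\int_{-\infty}^{\infty}\mu(s-r)\nu(r)\,dr$. Then: (i) $\gamma$ is nice, and for every $e\in\mathbb{R}^r$ with $\|e\|_2=1$ and every $\delta\ge0$ one has $\mathrm{Prob}\{e^T\xi\ge\delta\}\le\int_\delta^\infty\gamma(s)\,ds$. Moreover, the scalar random variable $e^T\xi$ possesses a symmetric density, so that the distribution of $\xi$ belongs to the sub-spherical family $\mathcal{P}^r_\gamma$. (ii) If, in addition, $\mathcal{P}^n$ is completely monotone, then the family of distributions of the random vectors $\xi$ induced by $\eta\sim p\in\mathcal{P}^n$ and $\zeta\sim q\in\mathcal{P}^m$ is a completely monotone subfamily of $\mathcal{P}^r_\gamma$.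
   Context: For an even probability density $\gamma$ on $\mathbb{R}$ positive in a neighbourhood of $0$, the sub-spherical family $\mathcal{P}^n_\gamma$ is the set of all even probability densities $p$ on $\mathbb{R}^n$ such that for every unit vector $e$ and $\delta\ge0$, $\int_{\{e^T\xi\ge\delta\}}p(\xi)d\xi\le\int_\delta^\infty\gamma(s)ds$. A function $\gamma$ on $\mathbb{R}$ is called nice if it is an even probability density which is continuous and nonincreasing on $[0,\infty)$. A subfamily $\mathcal{P}\subset\mathcal{P}^n_\gamma$ is completely monotone if $\gamma$ is nice and for every $p\in\mathcal{P}$ and every unit vector $e\in\mathbb{R}^n$ the random variable $e^T\xi$, $\xi\sim p$, has a probability density which is nice. $\succeq,\succ$ denote the positive semidefinite / definite orders. *)

theory Defs
  imports "HOL-Analysis.Analysis"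
begin

definition prob_density :: "('a::euclidean_space \<Rightarrow> real) \<Rightarrow> bool" where
  "prob_density p \<longleftrightarrow> p \<in> borel_measurable lborel \<and> (\<forall>x. 0 \<le> p x)
      \<and> integrable lborel p \<and> integral\<^sup>L lborel p = 1"

definition even_prob_density :: "('a::euclidean_space \<Rightarrow> real) \<Rightarrow> bool" where
  "even_prob_density p \<longleftrightarrow> prob_density p \<and> (\<forall>x. p (- x) = p x)"

definition nice :: "(real \<Rightarrow> real) \<Rightarrow> bool" where
  "nice g \<longleftrightarrow> even_prob_density g \<and> continuous_on {0..} g
      \<and> (\<forall>s t. 0 \<le> s \<longrightarrow> s \<le> t \<longrightarrow> g t \<le> g s)"

definition dens_measure :: "('a::euclidean_space \<Rightarrow> real) \<Rightarrow> 'a measure" where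
  "dens_measure p = density lborel (\<lambda>x. ennreal (p x))"

definition tail :: "(real \<Rightarrow> real) \<Rightarrow> real \<Rightarrow> real" where
  "tail g \<delta> = (LINT s:{\<delta>..}|lborel. g s)"

definition subspherical :: "(real \<Rightarrow> real) \<Rightarrow> (real^'n \<Rightarrow> real) set" where
  "subspherical g = {p. even_prob_density p \<and>
      (\<forall>e \<delta>. norm e = 1 \<longrightarrow> 0 \<le> \<delta> \<longrightarrow>
          measure (dens_measure p) {x. e \<bullet> x \<ge> \<delta>} \<le> tail g \<delta>)}"

definition completely_monotone :: "(real \<Rightarrow> real) \<Rightarrow> (real^'n \<Rightarrow> real) set \<Rightarrow> bool" where
  "completely_monotone g P \<longleftrightarrow> nice g \<and> P \<subseteq> subspherical g \<and>
     (\<forall>p\<in>P. \<forall>e. norm e = 1 \<longrightarrow>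
        (\<exists>f. nice f \<and> distr (dens_measure p) lborel (\<lambda>x. e \<bullet> x) = dens_measure f))"

definition psd_mat :: "real^'r^'r \<Rightarrow> bool" where
  "psd_mat M \<longleftrightarrow> transpose M = M \<and> (\<forall>x. 0 \<le> x \<bullet> (M *v x))"

definition pd_mat :: "real^'r^'r \<Rightarrow> bool" where
  "pd_mat M \<longleftrightarrow> transpose M = M \<and> (\<forall>x. x \<noteq> 0 \<longrightarrow> 0 < x \<bullet> (M *v x))"

definition law_xi :: "real^'r^'r \<Rightarrow> real^'n^'r \<Rightarrow> real^'m^'r
     \<Rightarrow> (real^'n \<Rightarrow> real) \<Rightarrow> (real^'m \<Rightarrow> real) \<Rightarrow> (real^'r) measure" where
  "law_xi \<Theta> A B p q = distr (dens_measure p \<Otimes>\<^sub>M dens_measure q) lborel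
      (\<lambda>(\<eta>, \<zeta>). matrix_inv \<Theta> *v (A *v \<eta> + B *v \<zeta>))"

end

theory Submission
  imports Defs "HOL-Probability.Probability"
begin

text \<open>
  For a unit vector \<open>e\<close> one has \<open>e\<^sup>T \<xi> = a\<^sup>T \<eta> + b\<^sup>T \<zeta>\<close> with \<open>a = A\<^sup>T \<Theta>\<^sup>-\<^sup>1 e\<close>
  and \<open>b = B\<^sup>T \<Theta>\<^sup>-\<^sup>1 e\<close>; the matrix inequalities give \<open>\<bar>a\<bar>, \<bar>b\<bar> \<le> 1\<close> and
  \<open>(a, b) \<noteq> 0\<close>. So the law of \<open>e\<^sup>T \<xi>\<close> is the convolution of two symmetric laws on
  the line whose tails are dominated by those of \<open>\<mu>\<close> and \<open>\<nu>\<close>, and the second one has a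
  nice density (or is a point mass).

  For a nice density \<open>k\<close>, \<open>K[\<delta> - x, \<infinity>) + K[\<delta> + x, \<infinity>) = 1 - (k * w) x\<close>, with \<open>w\<close>
  the indicator of \<open>(-\<delta>, \<delta>)\<close>, is nondecreasing in \<open>\<bar>x\<bar>\<close>, because the convolution
  of two symmetric unimodal functions is symmetric unimodal. By the layer-cake formula,
  replacing a symmetric factor of a convolution with \<open>K\<close> by one with larger tails can
  therefore only increase the upper tail; doing this for both factors bounds the tail of
  \<open>e\<^sup>T \<xi>\<close> by that of \<open>\<mu> * \<nu>\<close>. The same rearrangement shows that \<open>\<mu> * \<nu>\<close> is
  nice, which gives (ii). Densities exist because \<open>\<xi>\<close> is the image of a density under a
  surjective linear map, and symmetrising a Radon-Nikodym derivative makes them even.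
\<close>

lemma nice_abs_antimono:
  assumes "nice f" "\<bar>x\<bar> \<le> \<bar>y\<bar>"
  shows "f y \<le> f x"
proof -
  have "f \<bar>z\<bar> = f z" for z
    using assms(1) by (cases "0 \<le> z") (auto simp: nice_def even_prob_density_def)
  moreover have "f \<bar>y\<bar> \<le> f \<bar>x\<bar>" using assms by (auto simp: nice_def)
  ultimately show ?thesis by simp
qed

lemma
  assumes "even_prob_density p"
  shows even_prob_density_measurable: "p \<in> borel_measurable borel"
    and even_prob_density_nonneg: "0 \<le> p x"
    and even_prob_density_even: "p (- x) = p x"
    and even_prob_density_prob_density: "prob_density p"
  using assms by (auto simp: even_prob_density_def prob_density_def)

lemma
  assumes "nice f"
  shows nice_even_prob_density: "even_prob_density f"
    and nice_prob_density: "prob_density f"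
    and nice_measurable: "f \<in> borel_measurable borel"
    and nice_nonneg: "0 \<le> f x"
    and nice_le_zero: "f x \<le> f 0"
    and nice_even: "f (- x) = f x"
    and nice_integrable: "integrable lborel f"
  using assms nice_abs_antimono[OF assms, of 0 x]
  by (auto simp: nice_def even_prob_density_def prob_density_def)

lemma nice_continuous:
  assumes "nice f"
  shows "continuous_on UNIV f"
proof -
  have pos: "continuous_on {0..} f" using assms by (simp add: nice_def)
  have "continuous_on {..0} (\<lambda>x. f (- x))"
    by (rule continuous_on_compose2[OF pos]) (auto intro: continuous_intros)
  then have "continuous_on {..0} f"
    using nice_even[OF assms] by simp
  with pos have "continuous_on ({0..} \<union> {..0}) f"
    by (intro continuous_on_closed_Un) auto
  moreover have "{0..} \<union> {..0::real} = UNIV" by auto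
  ultimately show ?thesis by simp
qed

lemma sets_dens_measure [simp, measurable_cong]: "sets (dens_measure p) = sets borel"
  by (simp add: dens_measure_def)

lemma space_dens_measure [simp]: "space (dens_measure p) = UNIV"
  by (simp add: dens_measure_def)

lemma prob_space_dens_measure:
  assumes "prob_density p"
  shows "prob_space (dens_measure p)"
proof (rule prob_spaceI)
  have [measurable]: "p \<in> borel_measurable borel" using assms by (simp add: prob_density_def)
  have "emeasure (dens_measure p) (space (dens_measure p)) = (\<integral>\<^sup>+x. ennreal (p x) \<partial>lborel)"
    by (simp add: dens_measure_def emeasure_density)
  also have "\<dots> = ennreal (integral\<^sup>L lborel p)"
    using assms nn_integral_eq_integral[of lborel p] by (auto simp: prob_density_def)
  finally show "emeasure (dens_measure p) (space (dens_measure p)) = 1"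
    using assms by (simp add: prob_density_def)
qed

lemma prob_densityI:
  fixes g :: "'a::euclidean_space \<Rightarrow> real"
  assumes [measurable]: "g \<in> borel_measurable borel" and nonneg: "\<And>x. 0 \<le> g x"
    and "prob_space (dens_measure g)"
  shows "prob_density g"
proof -
  have one: "(\<integral>\<^sup>+x. ennreal (g x) \<partial>lborel) = 1"
    using prob_space.emeasure_space_1[OF assms(3)] by (simp add: dens_measure_def emeasure_density)
  then have "integrable lborel g"
    using nonneg by (subst integrable_iff_bounded) auto
  moreover have "integral\<^sup>L lborel g = enn2real (\<integral>\<^sup>+x. ennreal (g x) \<partial>lborel)"
    using nonneg by (subst integral_eq_nn_integral) auto
  ultimately show ?thesis using one nonneg by (auto simp: prob_density_def)
qed

lemma measure_dens_measure:
  fixes p :: "'a::euclidean_space \<Rightarrow> real"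
  assumes "prob_density p" and [measurable]: "A \<in> sets borel"
  shows "measure (dens_measure p) A = (LINT x:A|lborel. p x)"
proof -
  have [measurable]: "p \<in> borel_measurable borel" and int: "integrable lborel p"
    and nonneg: "\<And>x. 0 \<le> p x"
    using assms by (auto simp: prob_density_def)
  have "emeasure (dens_measure p) A = (\<integral>\<^sup>+x. ennreal (indicator A x *\<^sub>R p x) \<partial>lborel)"
    unfolding dens_measure_def
    by (subst emeasure_density) (auto intro!: nn_integral_cong split: split_indicator)
  also have "\<dots> = ennreal (LINT x:A|lborel. p x)"
    unfolding set_lebesgue_integral_def
    using integrable_mult_indicator[OF _ int, of A]
    by (intro nn_integral_eq_integral) (auto simp: nonneg)
  finally show ?thesis
    unfolding measure_def
    by (simp add: set_lebesgue_integral_def nonneg Bochner_Integration.integral_nonneg)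
qed

lemma tail_eq_measure:
  assumes "prob_density g"
  shows "tail g \<delta> = measure (dens_measure g) {\<delta>..}"
  using measure_dens_measure[OF assms, of "{\<delta>..}"] by (simp add: tail_def)

lemma tail_antimono:
  assumes "prob_density g" "s \<le> t"
  shows "tail g t \<le> tail g s"
proof -
  interpret prob_space "dens_measure g"
    using prob_space_dens_measure[OF assms(1)] .
  show ?thesis
    using assms(2) tail_eq_measure[OF assms(1)] by (simp add: finite_measure_mono)
qed

lemma lborel_distr_uminus_euclidean: "distr lborel borel uminus = (lborel :: 'a::euclidean_space measure)"
  using lborel_affine[of "-1" "0::'a"] by (simp add: density_1)

lemma distr_uminus_density_lborel:
  fixes u :: "'a::euclidean_space \<Rightarrow> ennreal"
  assumes [measurable]: "u \<in> borel_measurable borel"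
  shows "distr (density lborel u) lborel uminus = density lborel (\<lambda>x. u (- x))"
proof (rule measure_eqI)
  fix A assume "A \<in> sets (distr (density lborel u) lborel uminus)"
  then have [measurable]: "A \<in> sets borel" by simp
  have [measurable]: "uminus -` A \<in> sets borel"
    using measurable_sets_borel[of uminus borel A] by simp
  have "emeasure (distr (density lborel u) lborel uminus) A = emeasure (density lborel u) (uminus -` A)"
    by (subst emeasure_distr) auto
  also have "\<dots> = (\<integral>\<^sup>+x. u (- (- x)) * indicator A (- x) \<partial>lborel)"
    by (subst emeasure_density) (auto intro!: nn_integral_cong split: split_indicator)
  also have "\<dots> = (\<integral>\<^sup>+x. u (- (- x)) * indicator A (- x) \<partial>distr lborel borel uminus)"
    by (simp add: lborel_distr_uminus_euclidean)
  also have "\<dots> = (\<integral>\<^sup>+x. u (- x) * indicator A x \<partial>lborel)"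
    by (subst nn_integral_distr) auto
  finally show "emeasure (distr (density lborel u) lborel uminus) A
      = emeasure (density lborel (\<lambda>x. u (- x))) A"
    by (simp add: emeasure_density)
qed simp

lemma distr_uminus_dens_measure:
  assumes "even_prob_density p"
  shows "distr (dens_measure p) borel uminus = dens_measure p"
proof -
  have [measurable]: "p \<in> borel_measurable borel" by (rule even_prob_density_measurable[OF assms])
  have "distr (dens_measure p) borel uminus = distr (dens_measure p) lborel uminus"
    by (rule distr_cong) auto
  also have "\<dots> = density lborel (\<lambda>x. ennreal (p (- x)))"
    unfolding dens_measure_def by (rule distr_uminus_density_lborel) measurable
  finally show ?thesis
    by (simp add: dens_measure_def even_prob_density_even[OF assms])
qed

lemma linear_measurable:
  fixes L :: "'a::euclidean_space \<Rightarrow> 'b::euclidean_space"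
  shows "linear L \<Longrightarrow> L \<in> borel_measurable borel"
  by (intro borel_measurable_continuous_onI linear_continuous_on)
    (simp add: linear_conv_bounded_linear[symmetric])

lemma distr_uminus_distr_linear:
  fixes L :: "'a::euclidean_space \<Rightarrow> 'b::euclidean_space"
  assumes sym: "distr M borel uminus = M" and sets: "sets M = sets borel" and L: "linear L"
  shows "distr (distr M borel L) borel uminus = distr M borel L"
proof -
  have [measurable]: "L \<in> borel_measurable borel" using L by (rule linear_measurable)
  have [measurable_cong]: "sets M = sets borel" by fact
  have "distr (distr M borel L) borel uminus = distr M borel (L \<circ> uminus)"
    by (subst distr_distr) (auto simp: o_def linear_neg[OF L])
  also have "\<dots> = distr (distr M borel uminus) borel L"
    by (subst distr_distr) auto
  finally show ?thesis by (simp add: sym)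
qed

section \<open>Linear images of densities\<close>

lemma nn_integral_lborel_add:
  fixes F :: "'a::euclidean_space \<Rightarrow> ennreal"
  assumes [measurable]: "F \<in> borel_measurable borel"
  shows "(\<integral>\<^sup>+y. F (c + y) \<partial>lborel) = (\<integral>\<^sup>+y. F y \<partial>lborel)"
proof -
  have "(\<integral>\<^sup>+y. F y \<partial>lborel) = (\<integral>\<^sup>+y. F y \<partial>distr lborel borel ((+) c))"
    by (simp add: lborel_distr_plus)
  also have "\<dots> = (\<integral>\<^sup>+y. F (c + y) \<partial>lborel)"
    by (subst nn_integral_distr) auto
  finally show ?thesis ..
qed

text \<open>
  A linear surjection \<open>L\<close> (given with a linear right inverse \<open>R\<close>) pulls null sets back to
  null sets: by Tonelli, \<open>\<integral>\<^sub>x \<lambda>{y. L x + y \<in> N} = 0\<close>, while substituting \<open>x \<mapsto> R y + x\<close>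
  turns the same double integral into \<open>\<integral>\<^sub>y \<lambda>(L -` N) = \<lambda>(L -` N) \<cdot> \<infinity>\<close>.
\<close>
lemma null_sets_vimage_linear:
  fixes L :: "'a::euclidean_space \<Rightarrow> 'b::euclidean_space"
  assumes L: "linear L" and R: "linear R" and LR: "\<And>y. L (R y) = y"
    and N: "N \<in> null_sets lborel"
  shows "L -` N \<in> null_sets lborel"
proof -
  have [measurable]: "N \<in> sets borel" using N by auto
  have [measurable]: "L \<in> borel_measurable borel" "R \<in> borel_measurable borel"
    using L R by (auto intro: linear_measurable)
  define S where "S = L -` N"
  have [measurable]: "S \<in> sets borel" unfolding S_def using measurable_sets_borel[of L borel N] by simp
  have "0 = (\<integral>\<^sup>+x. \<integral>\<^sup>+y. indicator N (L x + y) \<partial>lborel \<partial>(lborel::'a measure))"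
    using null_setsD1[OF N] by (simp add: nn_integral_lborel_add)
  also have "\<dots> = (\<integral>\<^sup>+y. \<integral>\<^sup>+x. indicator N (L x + y) \<partial>(lborel::'a measure) \<partial>(lborel::'b measure))"
    by (rule lborel_pair.Fubini'[symmetric]) measurable
  also have "\<dots> = (\<integral>\<^sup>+y. \<integral>\<^sup>+x. indicator S (R y + x) \<partial>(lborel::'a measure) \<partial>(lborel::'b measure))"
    by (intro nn_integral_cong) (simp add: S_def indicator_def linear_add[OF L] LR add.commute)
  also have "\<dots> = emeasure lborel S * \<infinity>"
    by (simp add: nn_integral_lborel_add)
  finally have "emeasure lborel S = 0" by (simp add: ennreal_mult_eq_top_iff)
  then have "S \<in> null_sets lborel" by (intro null_setsI) auto
  then show ?thesis by (simp add: S_def)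
qed

lemma ennreal_half_add:
  fixes a b :: real
  assumes "0 \<le> a" "0 \<le> b"
  shows "ennreal ((a + b) / 2) = ennreal (1/2) * ennreal a + ennreal (1/2) * ennreal b"
proof -
  have "(a + b) / 2 = 1/2 * a + 1/2 * b" by simp
  then show ?thesis using assms by (simp only: ennreal_plus ennreal_mult mult_nonneg_nonneg)
qed

lemma dens_measure_symmetrization:
  fixes h :: "'a::euclidean_space \<Rightarrow> real"
  assumes [measurable]: "h \<in> borel_measurable borel" and nonneg: "\<And>x. 0 \<le> h x"
    and "dens_measure h = N" "dens_measure (\<lambda>x. h (- x)) = N"
  shows "dens_measure (\<lambda>x. (h x + h (- x)) / 2) = N"
proof (rule measure_eqI)
  fix A assume "A \<in> sets (dens_measure (\<lambda>x. (h x + h (- x)) / 2))"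
  then have [measurable]: "A \<in> sets borel" by simp
  have emeasure_N: "(\<integral>\<^sup>+x. ennreal (g x) * indicator A x \<partial>lborel) = emeasure N A"
    if "dens_measure g = N" "g \<in> borel_measurable borel" for g :: "'a \<Rightarrow> real"
    using that by (auto simp: dens_measure_def emeasure_density)
  have "ennreal ((h x + h (- x)) / 2) * indicator A x = ennreal (1/2) * (ennreal (h x) * indicator A x)
     + ennreal (1/2) * (ennreal (h (- x)) * indicator A x)" for x
    using ennreal_half_add[OF nonneg[of x] nonneg[of "- x"]]
    by (simp split: split_indicator del: ennreal_plus)
  then have "emeasure (dens_measure (\<lambda>x. (h x + h (- x)) / 2)) A
      = ennreal (1/2) * emeasure N A + ennreal (1/2) * emeasure N A"
    unfolding dens_measure_def
    by (subst emeasure_density) (auto simp: nn_integral_add nn_integral_cmult emeasure_N assms(3,4))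
  also have "\<dots> = (ennreal (1/2) + ennreal (1/2)) * emeasure N A"
    by (rule distrib_right[symmetric])
  also have "ennreal (1/2) + ennreal (1/2) = 1"
    by (subst ennreal_plus[symmetric]) auto
  finally show "emeasure (dens_measure (\<lambda>x. (h x + h (- x)) / 2)) A = emeasure N A" by simp
qed (use assms(3) in auto)

lemma symmetric_absolutely_continuous_imp_even_density:
  fixes N :: "'b::euclidean_space measure"
  assumes "prob_space N" and sN: "sets N = sets borel" and ac: "absolutely_continuous lborel N"
    and sym: "distr N borel uminus = N"
  shows "\<exists>g. even_prob_density g \<and> N = dens_measure g"
proof -
  interpret prob_space N by fact
  obtain f where [measurable]: "f \<in> borel_measurable borel" and fN: "density lborel f = N"
    using sigma_finite_measure.Radon_Nikodym[OF sigma_finite_lborel ac] sN by auto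
  have "(\<integral>\<^sup>+x. f x \<partial>lborel) = emeasure N (space N)"
    using sets_eq_imp_space_eq[OF sN] by (subst fN[symmetric]) (simp add: emeasure_density)
  then have "AE x in lborel. f x \<noteq> \<infinity>"
    by (intro nn_integral_noteq_infinite) (auto simp: emeasure_space_1)
  define h where "h x = enn2real (f x)" for x
  have h_measurable[measurable]: "h \<in> borel_measurable borel" unfolding h_def by measurable
  have h_nonneg: "0 \<le> h x" for x by (simp add: h_def)
  have hN: "dens_measure h = N"
    unfolding fN[symmetric] dens_measure_def h_def
    using \<open>AE x in lborel. f x \<noteq> \<infinity>\<close> by (intro density_cong) (auto simp: ennreal_enn2real_if)
  have "distr N borel uminus = distr N lborel uminus"
    by (rule distr_cong) (auto simp: sN)
  then have "dens_measure (\<lambda>x. h (- x)) = N"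
    using hN sym distr_uminus_density_lborel[of "\<lambda>x. ennreal (h x)"]
    by (simp add: dens_measure_def)
  then have gN: "dens_measure (\<lambda>x. (h x + h (- x)) / 2) = N"
    using hN h_measurable h_nonneg by (intro dens_measure_symmetrization)
  then have "prob_density (\<lambda>x. (h x + h (- x)) / 2)"
    using h_nonneg by (intro prob_densityI) (auto simp: prob_space_axioms)
  then have "even_prob_density (\<lambda>x. (h x + h (- x)) / 2)"
    by (simp add: even_prob_density_def)
  with gN show ?thesis by metis
qed

lemma distr_linear_even_density:
  fixes L :: "'a::euclidean_space \<Rightarrow> 'b::euclidean_space"
  assumes h: "even_prob_density h" and L: "linear L" and R: "linear R" and LR: "\<And>y. L (R y) = y"
  shows "\<exists>g. even_prob_density g \<and> distr (dens_measure h) lborel L = dens_measure g"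
proof (rule symmetric_absolutely_continuous_imp_even_density)
  have [measurable]: "L \<in> borel_measurable borel" using L by (rule linear_measurable)
  have [measurable]: "h \<in> borel_measurable borel" using h by (rule even_prob_density_measurable)
  interpret prob_space "dens_measure h"
    using prob_space_dens_measure[OF even_prob_density_prob_density[OF h]] .
  show "prob_space (distr (dens_measure h) lborel L)"
    by (rule prob_space_distr) simp
  show "sets (distr (dens_measure h) lborel L) = sets borel" by simp
  show "absolutely_continuous lborel (distr (dens_measure h) lborel L)"
    unfolding absolutely_continuous_def
  proof
    fix A :: "'b set" assume A: "A \<in> null_sets lborel"
    then have [measurable]: "A \<in> sets borel" by auto
    have "absolutely_continuous lborel (dens_measure h)"
      unfolding dens_measure_def by (rule absolutely_continuousI_density) measurable
    then have "L -` A \<in> null_sets (dens_measure h)"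
      using null_sets_vimage_linear[OF L R LR A] unfolding absolutely_continuous_def by auto
    then show "A \<in> null_sets (distr (dens_measure h) lborel L)"
      by (auto simp: null_sets_distr_iff)
  qed
  have "distr (dens_measure h) lborel L = distr (dens_measure h) borel L"
    by (rule distr_cong) auto
  then show "distr (distr (dens_measure h) lborel L) borel uminus = distr (dens_measure h) lborel L"
    using distr_uminus_distr_linear[OF distr_uminus_dens_measure[OF h] _ L]
    by (simp cong: distr_cong)
qed

section \<open>Convolution of nice densities\<close>

definition conv :: "(real \<Rightarrow> real) \<Rightarrow> (real \<Rightarrow> real) \<Rightarrow> real \<Rightarrow> real" where
  "conv f h x = (LINT y|lborel. f (x - y) * h y)"

definition symmetric_unimodal :: "(real \<Rightarrow> real) \<Rightarrow> bool" where
  "symmetric_unimodal f \<longleftrightarrow> f \<in> borel_measurable borel \<and> (\<forall>x. 0 \<le> f x)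
      \<and> (\<forall>x y. \<bar>x\<bar> \<le> \<bar>y\<bar> \<longrightarrow> f y \<le> f x)"

lemma
  assumes "symmetric_unimodal f"
  shows symmetric_unimodal_measurable: "f \<in> borel_measurable borel"
    and symmetric_unimodal_nonneg: "0 \<le> f x"
    and symmetric_unimodal_abs_antimono: "\<bar>x\<bar> \<le> \<bar>y\<bar> \<Longrightarrow> f y \<le> f x"
    and symmetric_unimodal_le_zero: "f x \<le> f 0"
    and symmetric_unimodal_even: "f (- x) = f x"
  using assms unfolding symmetric_unimodal_def by (auto intro: antisym)

lemma nice_symmetric_unimodal: "nice f \<Longrightarrow> symmetric_unimodal f"
  by (auto simp: symmetric_unimodal_def nice_measurable nice_nonneg intro: nice_abs_antimono)

lemma integrable_symmetric_unimodal_mult: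
  assumes f: "symmetric_unimodal f" and h: "integrable lborel h"
    and [measurable]: "a \<in> borel_measurable borel"
  shows "integrable lborel (\<lambda>y. f (a y) * h y)"
proof (rule Bochner_Integration.integrable_bound)
  have [measurable]: "f \<in> borel_measurable borel" "h \<in> borel_measurable borel"
    using symmetric_unimodal_measurable[OF f] h by auto
  show "integrable lborel (\<lambda>y. f 0 * h y)" using h by simp
  show "(\<lambda>y. f (a y) * h y) \<in> borel_measurable lborel" by measurable
  show "AE y in lborel. norm (f (a y) * h y) \<le> norm (f 0 * h y)"
    using symmetric_unimodal_nonneg[OF f] symmetric_unimodal_le_zero[OF f]
    by (auto simp: abs_mult intro!: mult_right_mono)
qed

lemma conv_nonneg:
  assumes "symmetric_unimodal f" "\<And>x. 0 \<le> h x"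
  shows "0 \<le> conv f h x"
  unfolding conv_def using assms
  by (intro Bochner_Integration.integral_nonneg) (simp add: symmetric_unimodal_nonneg)

lemma ennreal_conv:
  assumes f: "symmetric_unimodal f" and h: "integrable lborel h" "\<And>x. 0 \<le> h x"
  shows "ennreal (conv f h x) = (\<integral>\<^sup>+y. ennreal (f (x - y)) * ennreal (h y) \<partial>lborel)"
proof -
  have [measurable]: "f \<in> borel_measurable borel"
    using symmetric_unimodal_measurable[OF f] .
  have "ennreal (conv f h x) = (\<integral>\<^sup>+y. ennreal (f (x - y) * h y) \<partial>lborel)"
    unfolding conv_def using h symmetric_unimodal_nonneg[OF f]
    by (intro nn_integral_eq_integral[symmetric] integrable_symmetric_unimodal_mult[OF f]) auto
  also have "\<dots> = (\<integral>\<^sup>+y. ennreal (f (x - y)) * ennreal (h y) \<partial>lborel)"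
    using h symmetric_unimodal_nonneg[OF f] by (intro nn_integral_cong) (simp add: ennreal_mult)
  finally show ?thesis .
qed

lemma continuous_on_conv:
  assumes f: "nice f" and h: "integrable lborel h"
  shows "continuous_on UNIV (conv f h)"
proof (rule continuous_on_sequentiallyI)
  fix u :: "nat \<Rightarrow> real" and a :: real assume u: "u \<longlonglongrightarrow> a"
  have [measurable]: "f \<in> borel_measurable borel" "h \<in> borel_measurable borel"
    using nice_measurable[OF f] h by auto
  show "(\<lambda>n. conv f h (u n)) \<longlonglongrightarrow> conv f h a"
    unfolding conv_def
  proof (rule integral_dominated_convergence[where w = "\<lambda>y. f 0 * \<bar>h y\<bar>"])
    show "integrable lborel (\<lambda>y. f 0 * \<bar>h y\<bar>)" using h by simp
    show "AE y in lborel. (\<lambda>n. f (u n - y) * h y) \<longlonglongrightarrow> f (a - y) * h y"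
      using u nice_continuous[OF f]
      by (auto intro!: tendsto_intros continuous_on_tendsto_compose[of UNIV f])
    show "AE y in lborel. norm (f (u n - y) * h y) \<le> f 0 * \<bar>h y\<bar>" for n
      using nice_nonneg[OF f] nice_le_zero[OF f] by (auto simp: abs_mult intro!: mult_right_mono)
  qed measurable
qed

lemma conv_even:
  assumes "\<And>x. f (- x) = f x" "\<And>x. h (- x) = h x"
  shows "conv f h (- x) = conv f h x"
proof -
  have "conv f h (- x) = \<bar>-1\<bar> *\<^sub>R (LINT y|lborel. f (- x - (0 + (-1) * y)) * h (0 + (-1) * y))"
    unfolding conv_def by (rule lborel_integral_real_affine) simp
  also have "\<dots> = conv f h x"
    unfolding conv_def using assms[of "x - _"] assms(2) by simp
  finally show ?thesis .
qed

lemma symmetric_unimodal_rearrangement_nonneg: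
  assumes f: "symmetric_unimodal f" and h: "symmetric_unimodal h" and "0 \<le> s" "s \<le> t"
  shows "0 \<le> (f (s - y) - f (t - y)) * (h y - h (s + t - y))"
proof (cases "2 * y \<le> s + t")
  case True
  then have "f (t - y) \<le> f (s - y)" "h (s + t - y) \<le> h y"
    using assms by (auto intro!: symmetric_unimodal_abs_antimono[OF f] symmetric_unimodal_abs_antimono[OF h])
  then show ?thesis by simp
next
  case False
  then have "f (s - y) \<le> f (t - y)" "h y \<le> h (s + t - y)"
    using assms by (auto intro!: symmetric_unimodal_abs_antimono[OF f] symmetric_unimodal_abs_antimono[OF h])
  then show ?thesis by (simp add: mult_nonpos_nonpos)
qed

text \<open>
  Reflecting \<open>y \<mapsto> s + t - y\<close> shows
  \<open>2 (conv f h s - conv f h t) = \<integral> (f (s - y) - f (t - y)) (h y - h (s + t - y)) dy\<close>,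
  and the integrand is nonnegative.
\<close>
lemma conv_antimono:
  assumes f: "symmetric_unimodal f" and h: "symmetric_unimodal h" and hi: "integrable lborel h"
    and st: "0 \<le> s" "s \<le> t"
  shows "conv f h t \<le> conv f h s"
proof -
  have [measurable]: "f \<in> borel_measurable borel" "h \<in> borel_measurable borel"
    using symmetric_unimodal_measurable f h by auto
  define I where "I a b = (LINT y|lborel. f (a - y) * h (b - y))" for a b
  have I_int: "integrable lborel (\<lambda>y. f (a - y) * h (b - y))" for a b
  proof -
    have "integrable lborel (\<lambda>y. h (b + (-1) * y))"
      using hi by (intro lborel_integrable_real_affine) auto
    then show ?thesis
      using integrable_symmetric_unimodal_mult[OF f, of "\<lambda>y. h (b - y)" "\<lambda>y. a - y"] by simp
  qed
  have conv_I: "conv f h a = I a 0" for a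
    by (simp add: conv_def I_def symmetric_unimodal_even[OF h])
  have reflect: "I a 0 = I (s + t - a) (s + t)" for a
  proof -
    have "I a 0 = \<bar>-1\<bar> *\<^sub>R (LINT y|lborel. f (a - (s + t + (-1) * y)) * h (0 - (s + t + (-1) * y)))"
      unfolding I_def by (rule lborel_integral_real_affine) simp
    also have "\<dots> = I (s + t - a) (s + t)"
      unfolding I_def using symmetric_unimodal_even[OF f, of "s + t - a - y" for y]
        symmetric_unimodal_even[OF h, of "s + t - y" for y] by (simp add: algebra_simps)
    finally show ?thesis .
  qed
  have "2 * (conv f h s - conv f h t) = (I s 0 - I s (s + t)) + (I t (s + t) - I t 0)"
    using reflect[of s] reflect[of t] by (simp add: conv_I)
  also have "\<dots> = (LINT y|lborel. (f (s - y) * h (0 - y) - f (s - y) * h (s + t - y))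
      + (f (t - y) * h (s + t - y) - f (t - y) * h (0 - y)))"
    unfolding I_def using I_int
    by (simp only: Bochner_Integration.integral_diff Bochner_Integration.integral_add
        Bochner_Integration.integrable_diff)
  also have "\<dots> = (LINT y|lborel. (f (s - y) - f (t - y)) * (h y - h (s + t - y)))"
    by (simp add: symmetric_unimodal_even[OF h] algebra_simps)
  also have "0 \<le> \<dots>"
    by (intro Bochner_Integration.integral_nonneg symmetric_unimodal_rearrangement_nonneg f h st)
  finally show ?thesis by simp
qed

lemma dens_measure_conv:
  assumes f: "nice f" and h: "prob_density h"
  shows "dens_measure f \<star> dens_measure h = dens_measure (conv f h)"
proof -
  have [measurable]: "f \<in> borel_measurable borel" "h \<in> borel_measurable borel"
    using nice_measurable[OF f] h by (auto simp: prob_density_def)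
  have "finite_measure (dens_measure f)" "finite_measure (dens_measure h)"
    using prob_space_dens_measure[OF nice_prob_density[OF f]] prob_space_dens_measure[OF h]
    by (auto intro: prob_space.finite_measure)
  then have "dens_measure f \<star> dens_measure h
      = density lborel (\<lambda>x. \<integral>\<^sup>+y. ennreal (f (x - y)) * ennreal (h y) \<partial>lborel)"
    unfolding dens_measure_def by (intro convolution_density) auto
  also have "\<dots> = dens_measure (conv f h)"
    unfolding dens_measure_def using h
    by (simp add: ennreal_conv[OF nice_symmetric_unimodal[OF f]] prob_density_def)
  finally show ?thesis .
qed

lemma nice_conv:
  assumes f: "nice f" and h: "nice h"
  shows "nice (conv f h)"
proof -
  have cont: "continuous_on UNIV (conv f h)"
    using continuous_on_conv[OF f nice_integrable[OF h]] .
  then have [measurable]: "conv f h \<in> borel_measurable borel"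
    by (rule borel_measurable_continuous_onI)
  interpret pair_prob_space "dens_measure f" "dens_measure h"
    using prob_space_dens_measure[OF nice_prob_density[OF f]]
      prob_space_dens_measure[OF nice_prob_density[OF h]]
    by (simp add: pair_prob_space_def pair_sigma_finite_def prob_space_imp_sigma_finite)
  have "prob_space (dens_measure f \<star> dens_measure h)"
    unfolding convolution_def by (rule prob_space_distr) simp
  then have "prob_density (conv f h)"
    using conv_nonneg[OF nice_symmetric_unimodal[OF f] nice_nonneg[OF h]]
    by (intro prob_densityI) (auto simp: dens_measure_conv[OF f nice_prob_density[OF h]])
  moreover have "conv f h (- x) = conv f h x" for x
    using conv_even nice_even f h by blast
  moreover have "conv f h t \<le> conv f h s" if "0 \<le> s" "s \<le> t" for s t
    using conv_antimono[OF nice_symmetric_unimodal[OF f] nice_symmetric_unimodal[OF h]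
        nice_integrable[OF h] that] .
  ultimately show ?thesis
    using continuous_on_subset[OF cont] by (simp add: nice_def even_prob_density_def)
qed

section \<open>Comparison of convolution tails\<close>

lemma abs_upset_cases:
  fixes P :: "real \<Rightarrow> bool"
  assumes up: "\<And>a b. 0 \<le> a \<Longrightarrow> a \<le> b \<Longrightarrow> P a \<Longrightarrow> P b"
  obtains t where "0 \<le> t" "{x. P \<bar>x\<bar>} = {x. t \<le> \<bar>x\<bar>}"
    | t where "0 \<le> t" "{x. P \<bar>x\<bar>} = {x. t < \<bar>x\<bar>}"
    | "{x. P \<bar>x\<bar>} = {}"
proof (cases "\<exists>a\<ge>0. P a")
  case True
  define S where "S = {a. 0 \<le> a \<and> P a}"
  define t where "t = Inf S"
  have S: "S \<noteq> {}" "bdd_below S" using True by (auto simp: S_def bdd_below_def)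
  have t0: "0 \<le> t" unfolding t_def using S by (intro cInf_greatest) (auto simp: S_def)
  have low: "t \<le> a" if "0 \<le> a" "P a" for a
    unfolding t_def using that S by (intro cInf_lower) (auto simp: S_def)
  have above: "P b" if "t < b" for b
  proof -
    obtain a where "a \<in> S" "a < b" using \<open>t < b\<close> cInf_less_iff[OF S] unfolding t_def by auto
    then show ?thesis using up[of a b] by (auto simp: S_def)
  qed
  show thesis
  proof (cases "P t")
    case True
    have "P \<bar>x\<bar> \<longleftrightarrow> t \<le> \<bar>x\<bar>" for x
      using low[of "\<bar>x\<bar>"] up[OF t0, of "\<bar>x\<bar>"] True by auto
    then have "{x. P \<bar>x\<bar>} = {x. t \<le> \<bar>x\<bar>}" by simp
    with t0 show thesis by (rule that(1))
  next
    case False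
    have "P \<bar>x\<bar> \<longleftrightarrow> t < \<bar>x\<bar>" for x
      using low[of "\<bar>x\<bar>"] above[of "\<bar>x\<bar>"] False by (cases "t = \<bar>x\<bar>") auto
    then have "{x. P \<bar>x\<bar>} = {x. t < \<bar>x\<bar>}" by simp
    with t0 show thesis by (rule that(2))
  qed
qed (use that(3) in auto)

lemma emeasure_abs_upset_le:
  fixes V U :: "real measure"
  assumes "finite_measure V" "finite_measure U"
    and less: "\<And>s. 0 \<le> s \<Longrightarrow> measure V {x. s < \<bar>x\<bar>} \<le> measure U {x. s < \<bar>x\<bar>}"
    and le: "\<And>s. 0 \<le> s \<Longrightarrow> measure V {x. s \<le> \<bar>x\<bar>} \<le> measure U {x. s \<le> \<bar>x\<bar>}"
    and up: "\<And>a b. 0 \<le> a \<Longrightarrow> a \<le> b \<Longrightarrow> P a \<Longrightarrow> P b"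
  shows "emeasure V {x. P \<bar>x\<bar>} \<le> emeasure U {x. P \<bar>x\<bar>}"
  using abs_upset_cases[OF up] less le
  by cases (auto simp: finite_measure.emeasure_eq_measure[OF assms(1)]
      finite_measure.emeasure_eq_measure[OF assms(2)])

lemma nn_integral_layer_cake:
  fixes M :: "real measure" and \<phi> :: "real \<Rightarrow> real"
  assumes "finite_measure M" and sM: "sets M = sets borel" and [measurable]: "\<phi> \<in> borel_measurable borel"
  shows "(\<integral>\<^sup>+x. ennreal (\<phi> x) \<partial>M) = (\<integral>\<^sup>+c. emeasure M {x. 0 \<le> c \<and> c < \<phi> x} \<partial>lborel)"
proof -
  interpret M: finite_measure M by fact
  interpret pair_sigma_finite M lborel ..
  have [measurable_cong]: "sets M = sets borel" by fact
  have "ennreal (\<phi> x) = (\<integral>\<^sup>+c. indicator {c. 0 \<le> c \<and> c < \<phi> x} c \<partial>lborel)" for x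
  proof (cases "0 \<le> \<phi> x")
    case True
    then have "{c. 0 \<le> c \<and> c < \<phi> x} = {0..<\<phi> x}" by auto
    with True show ?thesis by simp
  qed (simp add: ennreal_neg)
  then have "(\<integral>\<^sup>+x. ennreal (\<phi> x) \<partial>M) = (\<integral>\<^sup>+x. \<integral>\<^sup>+c. indicator {c. 0 \<le> c \<and> c < \<phi> x} c \<partial>lborel \<partial>M)"
    by simp
  also have "\<dots> = (\<integral>\<^sup>+c. \<integral>\<^sup>+x. indicator {c. 0 \<le> c \<and> c < \<phi> x} c \<partial>M \<partial>lborel)"
    by (rule Fubini'[symmetric]) measurable
  also have "\<dots> = (\<integral>\<^sup>+c. emeasure M {x. 0 \<le> c \<and> c < \<phi> x} \<partial>lborel)"
  proof (intro nn_integral_cong)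
    fix c
    have "(\<integral>\<^sup>+x. indicator {c. 0 \<le> c \<and> c < \<phi> x} c \<partial>M) = (\<integral>\<^sup>+x. indicator {x. 0 \<le> c \<and> c < \<phi> x} x \<partial>M)"
      by (intro nn_integral_cong) (simp add: indicator_def)
    also have "\<dots> = emeasure M {x. 0 \<le> c \<and> c < \<phi> x}"
      using sets_eq_imp_space_eq[OF sM] by (subst nn_integral_indicator) auto
    finally show "(\<integral>\<^sup>+x. indicator {c. 0 \<le> c \<and> c < \<phi> x} c \<partial>M) = emeasure M {x. 0 \<le> c \<and> c < \<phi> x}" .
  qed
  finally show ?thesis .
qed

lemma nn_integral_abs_mono_le:
  fixes V U :: "real measure" and \<phi> :: "real \<Rightarrow> real"
  assumes V: "finite_measure V" "sets V = sets borel" and U: "finite_measure U" "sets U = sets borel"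
    and less: "\<And>s. 0 \<le> s \<Longrightarrow> measure V {x. s < \<bar>x\<bar>} \<le> measure U {x. s < \<bar>x\<bar>}"
    and le: "\<And>s. 0 \<le> s \<Longrightarrow> measure V {x. s \<le> \<bar>x\<bar>} \<le> measure U {x. s \<le> \<bar>x\<bar>}"
    and \<phi>: "\<phi> \<in> borel_measurable borel"
    and mono: "\<And>x y. \<bar>x\<bar> \<le> \<bar>y\<bar> \<Longrightarrow> \<phi> x \<le> \<phi> y"
  shows "(\<integral>\<^sup>+x. ennreal (\<phi> x) \<partial>V) \<le> (\<integral>\<^sup>+x. ennreal (\<phi> x) \<partial>U)"
proof -
  have "emeasure V {x. 0 \<le> c \<and> c < \<phi> x} \<le> emeasure U {x. 0 \<le> c \<and> c < \<phi> x}" for c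
  proof (cases "0 \<le> c")
    case True
    have "\<phi> \<bar>x\<bar> = \<phi> x" for x using mono[of x "\<bar>x\<bar>"] mono[of "\<bar>x\<bar>" x] by simp
    then have "{x. 0 \<le> c \<and> c < \<phi> x} = {x. c < \<phi> \<bar>x\<bar>}" using True by auto
    moreover have "c < \<phi> b" if "0 \<le> a" "a \<le> b" "c < \<phi> a" for a b
      using mono[of a b] that by simp
    then have "emeasure V {x. c < \<phi> \<bar>x\<bar>} \<le> emeasure U {x. c < \<phi> \<bar>x\<bar>}"
      by (intro emeasure_abs_upset_le V(1) U(1) less le)
    ultimately show ?thesis by simp
  qed simp
  then show ?thesis
    unfolding nn_integral_layer_cake[OF V \<phi>] nn_integral_layer_cake[OF U \<phi>] by (intro nn_integral_mono)
qed

definition window :: "real \<Rightarrow> real \<Rightarrow> real" where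
  "window \<delta> = indicator {-\<delta><..<\<delta>}"

lemma symmetric_unimodal_window: "symmetric_unimodal (window \<delta>)"
  by (auto simp: window_def symmetric_unimodal_def split: split_indicator)

lemma integrable_window: "integrable lborel (window \<delta>)"
  by (cases "0 \<le> \<delta>") (auto simp: window_def emeasure_lborel_Ioo intro!: integrable_real_indicator)

lemma measure_dens_measure_atLeast_even:
  fixes k :: "real \<Rightarrow> real"
  assumes k: "even_prob_density k"
  shows "measure (dens_measure k) {c..} = (LINT y|lborel. indicator {..- c} y * k y)"
proof -
  have "measure (dens_measure k) {c..} = (LINT y|lborel. indicator {c..} y * k y)"
    using measure_dens_measure[OF even_prob_density_prob_density[OF k] atLeast_borel]
    by (simp add: set_lebesgue_integral_def)
  also have "\<dots> = \<bar>-1\<bar> *\<^sub>R (LINT y|lborel. indicator {c..} (0 + (-1) * y) * k (0 + (-1) * y))"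
    by (rule lborel_integral_real_affine) simp
  also have "\<dots> = (LINT y|lborel. indicator {..- c} y * k y)"
    by (auto simp: even_prob_density_even[OF k] intro!: Bochner_Integration.integral_cong
        split: split_indicator)
  finally show ?thesis .
qed

lemma measure_atLeast_add_eq_conv_window:
  assumes k: "even_prob_density k" and "0 \<le> \<delta>"
  shows "measure (dens_measure k) {\<delta> - x..} + measure (dens_measure k) {\<delta> + x..}
    = 1 - conv k (window \<delta>) x"
proof -
  have [measurable]: "k \<in> borel_measurable borel" "window \<delta> \<in> borel_measurable borel"
    using even_prob_density_measurable[OF k] symmetric_unimodal_measurable[OF symmetric_unimodal_window] .
  have pk: "prob_density k" and ik: "integrable lborel k"
    using even_prob_density_prob_density[OF k] by (auto simp: prob_density_def)
  have int_ind: "integrable lborel (\<lambda>y. indicator S y * k y)" if "S \<in> sets lborel" for S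
    using integrable_mult_indicator[OF that ik] by simp
  have int_win: "integrable lborel (\<lambda>y. window \<delta> (x - y) * k y)"
    using integrable_symmetric_unimodal_mult[OF symmetric_unimodal_window ik, of "\<lambda>y. x - y"]
    by (simp add: mult.commute)
  have tail: "measure (dens_measure k) {c..} = (LINT y|lborel. indicator {c..} y * k y)" for c
    using measure_dens_measure[OF pk, of "{c..}"] by (simp add: set_lebesgue_integral_def)
  have left: "measure (dens_measure k) {\<delta> - x..} = (LINT y|lborel. indicator {..x - \<delta>} y * k y)"
    using measure_dens_measure_atLeast_even[OF k, of "\<delta> - x"] by simp
  have win: "conv k (window \<delta>) x = (LINT y|lborel. window \<delta> (x - y) * k y)"
  proof -
    have "conv k (window \<delta>) x = \<bar>-1\<bar> *\<^sub>R (LINT y|lborel. k (x - (x + (-1) * y)) * window \<delta> (x + (-1) * y))"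
      unfolding conv_def by (rule lborel_integral_real_affine) simp
    then show ?thesis by (simp add: mult.commute)
  qed
  have "measure (dens_measure k) {\<delta> - x..} + measure (dens_measure k) {\<delta> + x..} + conv k (window \<delta>) x
     = (LINT y|lborel. indicator {..x - \<delta>} y * k y + indicator {\<delta> + x..} y * k y + window \<delta> (x - y) * k y)"
    using int_ind[of "{..x - \<delta>}"] int_ind[of "{\<delta> + x..}"] int_win
    by (simp only: left win tail[of "\<delta> + x"] Bochner_Integration.integral_add[symmetric]
        Bochner_Integration.integrable_add sets_lborel atMost_borel atLeast_borel)
  also have "\<dots> = (LINT y|lborel. k y)"
    using AE_lborel_singleton[of x] \<open>0 \<le> \<delta>\<close>
    by (intro integral_cong_AE) (auto simp: window_def indicator_def elim!: eventually_mono)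
  also have "\<dots> = 1" using pk by (simp add: prob_density_def)
  finally show ?thesis by simp
qed

lemma borel_measurable_measure_atLeast:
  fixes H :: "real measure"
  assumes "finite_measure H" "sets H = sets borel"
  shows "(\<lambda>c. measure H {c..}) \<in> borel_measurable borel"
proof -
  interpret finite_measure H by fact
  have "antimono (\<lambda>c. measure H {c..})"
    using assms(2) by (intro antimonoI finite_measure_mono) auto
  then have "(\<lambda>c. - measure H {c..}) \<in> borel_measurable borel"
    by (intro borel_measurable_mono) (simp add: antimono_def monotone_on_def)
  then show ?thesis
    using borel_measurable_uminus[of "\<lambda>c. - measure H {c..}" borel] by simp
qed

lemma emeasure_convolution_atLeast_symmetric:
  fixes M H :: "real measure"
  assumes "prob_space M" and sM: "sets M = sets borel" and sym: "distr M borel uminus = M"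
    and "prob_space H" and sH: "sets H = sets borel"
  shows "emeasure (M \<star> H) {\<delta>..} + emeasure (M \<star> H) {\<delta>..}
    = (\<integral>\<^sup>+x. ennreal (measure H {\<delta> - x..} + measure H {\<delta> + x..}) \<partial>M)"
proof -
  interpret M: prob_space M by fact
  interpret H: prob_space H by fact
  have [measurable_cong]: "sets M = sets borel" by fact
  have [measurable]: "(\<lambda>c. measure H {c..}) \<in> borel_measurable borel"
    by (rule borel_measurable_measure_atLeast[OF H.finite_measure_axioms sH])
  have "emeasure (M \<star> H) {\<delta>..} = (\<integral>\<^sup>+x. emeasure H {a. a + x \<in> {\<delta>..}} \<partial>M)"
    using sM sH sets_eq_imp_space_eq[OF sM] sets_eq_imp_space_eq[OF sH]
    by (intro convolution_emeasure) (auto intro: M.finite_measure_axioms H.finite_measure_axioms)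
  also have "\<dots> = (\<integral>\<^sup>+x. ennreal (measure H {\<delta> - x..}) \<partial>M)"
    by (intro nn_integral_cong) (auto simp: H.emeasure_eq_measure intro!: arg_cong[where f = "measure H"])
  finally have minus: "emeasure (M \<star> H) {\<delta>..} = (\<integral>\<^sup>+x. ennreal (measure H {\<delta> - x..}) \<partial>M)" .
  have "(\<integral>\<^sup>+x. ennreal (measure H {\<delta> - x..}) \<partial>M)
      = (\<integral>\<^sup>+x. ennreal (measure H {\<delta> - x..}) \<partial>distr M borel uminus)"
    by (simp add: sym)
  then have plus: "emeasure (M \<star> H) {\<delta>..} = (\<integral>\<^sup>+x. ennreal (measure H {\<delta> + x..}) \<partial>M)"
    by (simp add: minus nn_integral_distr)
  have "emeasure (M \<star> H) {\<delta>..} + emeasure (M \<star> H) {\<delta>..}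
      = (\<integral>\<^sup>+x. ennreal (measure H {\<delta> - x..}) \<partial>M) + (\<integral>\<^sup>+x. ennreal (measure H {\<delta> + x..}) \<partial>M)"
    using minus plus by simp
  also have "\<dots> = (\<integral>\<^sup>+x. ennreal (measure H {\<delta> - x..} + measure H {\<delta> + x..}) \<partial>M)"
    by (subst nn_integral_add[symmetric]) auto
  finally show ?thesis .
qed

text \<open>
  The integrand \<open>K{\<delta>-x..} + K{\<delta>+x..}\<close> of the previous lemma is \<open>1 - conv k (window \<delta>)\<close>,
  a function increasing in \<open>\<bar>x\<bar>\<close>.
\<close>
lemma measure_convolution_atLeast_mono:
  fixes V U :: "real measure"
  assumes V: "prob_space V" "sets V = sets borel" "distr V borel uminus = V"
    and U: "prob_space U" "sets U = sets borel" "distr U borel uminus = U"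
    and less: "\<And>s. 0 \<le> s \<Longrightarrow> measure V {x. s < \<bar>x\<bar>} \<le> measure U {x. s < \<bar>x\<bar>}"
    and le: "\<And>s. 0 \<le> s \<Longrightarrow> measure V {x. s \<le> \<bar>x\<bar>} \<le> measure U {x. s \<le> \<bar>x\<bar>}"
    and k: "nice k" and "0 \<le> \<delta>"
  shows "measure (V \<star> dens_measure k) {\<delta>..} \<le> measure (U \<star> dens_measure k) {\<delta>..}"
proof -
  define K where "K = dens_measure k"
  have K: "prob_space K" "sets K = sets borel"
    unfolding K_def using prob_space_dens_measure[OF nice_prob_density[OF k]] by simp_all
  define \<psi> where "\<psi> x = measure K {\<delta> - x..} + measure K {\<delta> + x..}" for x
  have [measurable]: "\<psi> \<in> borel_measurable borel"
    unfolding \<psi>_def using borel_measurable_measure_atLeast[OF prob_space.finite_measure[OF K(1)] K(2)]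
    by measurable
  have \<psi>_conv: "\<psi> x = 1 - conv k (window \<delta>) x" for x
    unfolding \<psi>_def K_def
    by (rule measure_atLeast_add_eq_conv_window[OF nice_even_prob_density[OF k] \<open>0 \<le> \<delta>\<close>])
  have \<psi>_mono: "\<psi> x \<le> \<psi> y" if "\<bar>x\<bar> \<le> \<bar>y\<bar>" for x y
  proof -
    have even: "conv k (window \<delta>) \<bar>z\<bar> = conv k (window \<delta>) z" for z
      using conv_even[of k "window \<delta>" z] nice_even[OF k]
      by (cases "0 \<le> z") (auto simp: window_def split: split_indicator)
    have "conv k (window \<delta>) \<bar>y\<bar> \<le> conv k (window \<delta>) \<bar>x\<bar>"
      using that by (intro conv_antimono nice_symmetric_unimodal[OF k] symmetric_unimodal_window
          integrable_window) auto
    then show ?thesis using even by (simp add: \<psi>_conv)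
  qed
  have "(\<integral>\<^sup>+x. ennreal (\<psi> x) \<partial>V) \<le> (\<integral>\<^sup>+x. ennreal (\<psi> x) \<partial>U)"
    using V U by (intro nn_integral_abs_mono_le less le \<psi>_mono) (auto intro: prob_space.finite_measure)
  then have "emeasure (V \<star> K) {\<delta>..} + emeasure (V \<star> K) {\<delta>..}
      \<le> emeasure (U \<star> K) {\<delta>..} + emeasure (U \<star> K) {\<delta>..}"
    unfolding \<psi>_def by (simp only: emeasure_convolution_atLeast_symmetric[OF V K]
        emeasure_convolution_atLeast_symmetric[OF U K])
  moreover have fin: "finite_measure (M \<star> K)" if "prob_space M" "sets M = sets borel" for M
    using that K by (intro convolution_finite) (auto intro: prob_space.finite_measure)
  ultimately have "ennreal (measure (V \<star> K) {\<delta>..} + measure (V \<star> K) {\<delta>..})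
      \<le> ennreal (measure (U \<star> K) {\<delta>..} + measure (U \<star> K) {\<delta>..})"
    by (simp only: finite_measure.emeasure_eq_measure[OF fin[OF V(1,2)]]
        finite_measure.emeasure_eq_measure[OF fin[OF U(1,2)]] ennreal_plus[OF measure_nonneg measure_nonneg])
  then show ?thesis by (simp add: K_def ennreal_le_iff)
qed

lemma measure_abs_ge_eq_twice_atLeast:
  fixes P :: "real measure"
  assumes "prob_space P" "sets P = sets borel" "distr P borel uminus = P" "0 < s"
  shows "measure P {x. s \<le> \<bar>x\<bar>} = 2 * measure P {s..}"
proof -
  interpret prob_space P by fact
  have "measure P {s..} = measure (distr P borel uminus) {s..}"
    using assms(3) by simp
  also have "\<dots> = measure P (uminus -` {s..} \<inter> space P)"
    by (rule measure_distr) (auto simp: measurable_cong_sets[OF assms(2) refl] assms(2))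
  also have "uminus -` {s..} \<inter> space P = {..-s}"
    using sets_eq_imp_space_eq[OF assms(2)] by auto
  finally have "measure P {..-s} = measure P {s..}" ..
  moreover have "{x. s \<le> \<bar>x\<bar>} = {s..} \<union> {..-s}" by auto
  moreover have "measure P ({s..} \<union> {..-s}) = measure P {s..} + measure P {..-s}"
    using assms by (intro finite_measure_Union) auto
  ultimately show ?thesis by simp
qed

lemma measure_abs_gt_eq_abs_ge:
  fixes k :: "real \<Rightarrow> real"
  assumes "prob_density k" "0 \<le> s"
  shows "measure (dens_measure k) {x. s < \<bar>x\<bar>} = measure (dens_measure k) {x. s \<le> \<bar>x\<bar>}"
proof -
  have [measurable]: "k \<in> borel_measurable borel" using assms by (simp add: prob_density_def)
  have "absolutely_continuous lborel (dens_measure k)"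
    unfolding dens_measure_def by (rule absolutely_continuousI_density) measurable
  then have "{s, -s} \<in> null_sets (dens_measure k)"
    using finite_imp_null_set_lborel[of "{s, -s}"] unfolding absolutely_continuous_def by auto
  then have "measure (dens_measure k) ({x. s < \<bar>x\<bar>} \<union> {s, -s}) = measure (dens_measure k) {x. s < \<bar>x\<bar>}"
    by (intro measure_Un_null_set) auto
  moreover have "{x. s < \<bar>x\<bar>} \<union> {s, -s} = {x. s \<le> \<bar>x\<bar>}" using assms(2) by auto
  ultimately show ?thesis by simp
qed

lemma measure_convolution_atLeast_le:
  fixes V :: "real measure"
  assumes V: "prob_space V" "sets V = sets borel" "distr V borel uminus = V"
    and u: "nice u" and tail: "\<And>s. 0 < s \<Longrightarrow> measure V {s..} \<le> tail u s"
    and k: "nice k" and "0 \<le> \<delta>"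
  shows "measure (V \<star> dens_measure k) {\<delta>..} \<le> measure (dens_measure u \<star> dens_measure k) {\<delta>..}"
proof (rule measure_convolution_atLeast_mono[OF V _ _ _ _ _ k \<open>0 \<le> \<delta>\<close>])
  interpret V: prob_space V by fact
  have pu: "prob_density u" using nice_prob_density[OF u] .
  interpret U: prob_space "dens_measure u" using prob_space_dens_measure[OF pu] .
  show "prob_space (dens_measure u)" "sets (dens_measure u) = sets borel"
    by (simp_all add: U.prob_space_axioms)
  have symU: "distr (dens_measure u) borel uminus = dens_measure u"
    using distr_uminus_dens_measure[OF nice_even_prob_density[OF u]] .
  then show "distr (dens_measure u) borel uminus = dens_measure u" .
  have ge: "measure V {x. s \<le> \<bar>x\<bar>} \<le> measure (dens_measure u) {x. s \<le> \<bar>x\<bar>}" if "0 \<le> s" for s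
  proof (cases "s = 0")
    case True
    then show ?thesis using V.prob_space U.prob_space sets_eq_imp_space_eq[OF V(2)] by simp
  next
    case False
    with that have "0 < s" by simp
    then show ?thesis
      using tail[of s] tail_eq_measure[OF pu, of s]
        measure_abs_ge_eq_twice_atLeast[OF V \<open>0 < s\<close>]
        measure_abs_ge_eq_twice_atLeast[OF U.prob_space_axioms _ symU \<open>0 < s\<close>]
      by simp
  qed
  then show "measure V {x. s \<le> \<bar>x\<bar>} \<le> measure (dens_measure u) {x. s \<le> \<bar>x\<bar>}" if "0 \<le> s" for s
    using that .
  show "measure V {x. s < \<bar>x\<bar>} \<le> measure (dens_measure u) {x. s < \<bar>x\<bar>}" if "0 \<le> s" for s
  proof -
    have "measure V {x. s < \<bar>x\<bar>} \<le> measure V {x. s \<le> \<bar>x\<bar>}"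
      using V(2) by (intro V.finite_measure_mono) auto
    then show ?thesis using ge[OF that] measure_abs_gt_eq_abs_ge[OF pu that] by simp
  qed
qed


lemma convolution_return_zero:
  fixes M :: "real measure"
  assumes M: "finite_measure M" and sM: "sets M = sets borel"
  shows "(M \<star> return lborel 0) = M" and "(return lborel 0 \<star> M) = M"
proof -
  have spM: "space M = UNIV" using sets_eq_imp_space_eq[OF sM] by simp
  have R: "finite_measure (return lborel (0::real))"
    by (intro prob_space.finite_measure prob_space_return) simp
  show right: "(M \<star> return lborel 0) = M"
  proof (rule measure_eqI)
    fix A assume "A \<in> sets (M \<star> return lborel 0)"
    then have [measurable]: "A \<in> sets borel" by simp
    have "emeasure (M \<star> return lborel 0) A = (\<integral>\<^sup>+x. emeasure (return lborel 0) {a. a + x \<in> A} \<partial>M)"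
      by (rule convolution_emeasure) (simp_all add: M R sM spM)
    also have "\<dots> = (\<integral>\<^sup>+x. indicator A x \<partial>M)"
    proof (intro nn_integral_cong)
      fix x
      have "{a. a + x \<in> A} = (\<lambda>a. a + x) -` A \<inter> space borel" by auto
      then have "{a. a + x \<in> A} \<in> sets borel"
        using measurable_sets_borel[of "\<lambda>a. a + x" borel A] by simp
      then show "emeasure (return lborel 0) {a. a + x \<in> A} = indicator A x"
        by (simp add: indicator_def)
    qed
    also have "\<dots> = emeasure M A" by (rule nn_integral_indicator) (simp add: sM)
    finally show "emeasure (M \<star> return lborel 0) A = emeasure M A" .
  qed (simp add: sM)
  show "(return lborel 0 \<star> M) = M"
    using convolution_commutative[OF M R] right sM by simp
qed

lemma measure_convolution_atLeast_le_conv: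
  fixes X :: "real measure"
  assumes X: "prob_space X" "sets X = sets borel" "distr X borel uminus = X"
    and \<mu>: "nice \<mu>" and tail_X: "\<And>s. 0 < s \<Longrightarrow> measure X {s..} \<le> tail \<mu> s"
    and \<nu>: "nice \<nu>" and k: "nice k" and tail_k: "\<And>s. 0 < s \<Longrightarrow> measure (dens_measure k) {s..} \<le> tail \<nu> s"
    and "0 \<le> \<delta>"
  shows "measure (X \<star> dens_measure k) {\<delta>..} \<le> tail (conv \<mu> \<nu>) \<delta>"
proof -
  have fin: "finite_measure (dens_measure f)" if "nice f" for f
    using prob_space_dens_measure[OF nice_prob_density[OF that]] by (rule prob_space.finite_measure)
  have K: "prob_space (dens_measure k)" "sets (dens_measure k) = sets borel"
    "distr (dens_measure k) borel uminus = dens_measure k"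
    using prob_space_dens_measure[OF nice_prob_density[OF k]]
      distr_uminus_dens_measure[OF nice_even_prob_density[OF k]]
    by simp_all
  have "measure (X \<star> dens_measure k) {\<delta>..} \<le> measure (dens_measure \<mu> \<star> dens_measure k) {\<delta>..}"
    using X \<mu> tail_X k \<open>0 \<le> \<delta>\<close> by (rule measure_convolution_atLeast_le)
  also have "(dens_measure \<mu> \<star> dens_measure k) = (dens_measure k \<star> dens_measure \<mu>)"
    using fin[OF \<mu>] fin[OF k] by (intro convolution_commutative) auto
  also have "measure \<dots> {\<delta>..} \<le> measure (dens_measure \<nu> \<star> dens_measure \<mu>) {\<delta>..}"
    using K \<nu> tail_k \<mu> \<open>0 \<le> \<delta>\<close> by (rule measure_convolution_atLeast_le)
  also have "(dens_measure \<nu> \<star> dens_measure \<mu>) = dens_measure (conv \<mu> \<nu>)"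
    using convolution_commutative[OF fin[OF \<mu>] fin[OF \<nu>]] dens_measure_conv[OF \<mu> nice_prob_density[OF \<nu>]]
    by simp
  finally show ?thesis
    using tail_eq_measure[OF nice_prob_density[OF nice_conv[OF \<mu> \<nu>]]] by simp
qed

lemma tail_le_tail_conv:
  assumes \<mu>: "nice \<mu>" and \<nu>: "nice \<nu>" and "0 \<le> \<delta>"
  shows "tail \<mu> \<delta> \<le> tail (conv \<mu> \<nu>) \<delta>"
proof -
  have fin: "finite_measure (dens_measure f)" if "nice f" for f
    using prob_space_dens_measure[OF nice_prob_density[OF that]] by (rule prob_space.finite_measure)
  have R: "prob_space (return lborel (0::real))" "sets (return lborel (0::real)) = sets borel"
    "distr (return lborel (0::real)) borel uminus = return lborel 0"
    by (simp_all add: prob_space_return distr_return return_cong[of borel lborel])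
  have "tail \<mu> \<delta> = measure (return lborel 0 \<star> dens_measure \<mu>) {\<delta>..}"
    using tail_eq_measure[OF nice_prob_density[OF \<mu>]] convolution_return_zero(2)[OF fin[OF \<mu>]] by simp
  also have "\<dots> \<le> measure (dens_measure \<nu> \<star> dens_measure \<mu>) {\<delta>..}"
    using R \<nu> _ \<mu> \<open>0 \<le> \<delta>\<close> by (rule measure_convolution_atLeast_le)
      (simp add: tail_eq_measure[OF nice_prob_density[OF \<nu>]] measure_return)
  also have "(dens_measure \<nu> \<star> dens_measure \<mu>) = dens_measure (conv \<mu> \<nu>)"
    using convolution_commutative[OF fin[OF \<mu>] fin[OF \<nu>]] dens_measure_conv[OF \<mu> nice_prob_density[OF \<nu>]]
    by simp
  finally show ?thesis
    using tail_eq_measure[OF nice_prob_density[OF nice_conv[OF \<mu> \<nu>]]] by simp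
qed

section \<open>The linear map defining \<open>\<xi>\<close>\<close>

declare transpose_matrix_vector [simp del]

lemma inner_matrix_vector_transpose: "(x :: real^'m) \<bullet> (M *v y) = (transpose M *v x) \<bullet> y"
  by (metis dot_lmul_matrix transpose_transpose vector_transpose_matrix)

lemma pd_mat_matrix_inv:
  fixes M :: "real^'r^'r"
  assumes "pd_mat M"
  shows "M ** matrix_inv M = mat 1" "matrix_inv M ** M = mat 1"
proof -
  have "inj ((*v) M)"
  proof (rule injI)
    fix x y assume "M *v x = M *v y"
    then have "(x - y) \<bullet> (M *v (x - y)) = 0" by (simp add: matrix_vector_mult_diff_distrib)
    then show "x = y" using assms by (auto simp: pd_mat_def dest: spec[of _ "x - y"])
  qed
  then obtain B :: "real^'r^'r" where "B ** M = mat 1"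
    using matrix_left_invertible_injective by blast
  then have "invertible M" using invertible_left_inverse by blast
  then have "M ** matrix_inv M = mat 1 \<and> matrix_inv M ** M = mat 1"
    unfolding invertible_def matrix_inv_def by (rule someI_ex)
  then show "M ** matrix_inv M = mat 1" "matrix_inv M ** M = mat 1" by auto
qed

lemma pd_mat_mult_transpose_matrix_inv:
  fixes \<Theta> :: "real^'r^'r"
  assumes "pd_mat \<Theta>"
  shows "\<Theta> *v (transpose (matrix_inv \<Theta>) *v e) = e"
proof -
  have "\<Theta> ** transpose (matrix_inv \<Theta>) = transpose (matrix_inv \<Theta> ** transpose \<Theta>)"
    by (simp add: matrix_transpose_mul)
  also have "\<dots> = mat 1"
    using pd_mat_matrix_inv(2)[OF assms] assms by (simp add: pd_mat_def)
  finally show ?thesis by (simp add: matrix_vector_mul_assoc)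
qed

definition xi_map :: "real^'r^'r \<Rightarrow> real^'n^'r \<Rightarrow> real^'m^'r \<Rightarrow> (real^'n) \<times> (real^'m) \<Rightarrow> real^'r" where
  "xi_map \<Theta> A B w = matrix_inv \<Theta> *v (A *v fst w + B *v snd w)"

definition xi_map_right_inverse ::
    "real^'r^'r \<Rightarrow> real^'n^'r \<Rightarrow> real^'m^'r \<Rightarrow> real^'r \<Rightarrow> (real^'n) \<times> (real^'m)" where
  "xi_map_right_inverse \<Theta> A B y =
    (let z = matrix_inv (A ** transpose A + B ** transpose B) *v (\<Theta> *v y)
     in (transpose A *v z, transpose B *v z))"

lemma linear_xi_map: "linear (xi_map \<Theta> A B)"
  unfolding xi_map_def
  by (intro linearI) (auto simp: matrix_vector_right_distrib algebra_simps matrix_vector_mult_scaleR)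

lemma linear_xi_map_right_inverse: "linear (xi_map_right_inverse \<Theta> A B)"
  unfolding xi_map_right_inverse_def Let_def
  by (intro linearI) (auto simp: matrix_vector_right_distrib matrix_vector_mult_scaleR)

lemma xi_map_right_inverse:
  assumes "pd_mat \<Theta>" "pd_mat (A ** transpose A + B ** transpose B)"
  shows "xi_map \<Theta> A B (xi_map_right_inverse \<Theta> A B y) = y"
proof -
  define S where "S = A ** transpose A + B ** transpose B"
  define z where "z = matrix_inv S *v (\<Theta> *v y)"
  have "A *v (transpose A *v z) + B *v (transpose B *v z) = S *v z"
    by (simp add: S_def matrix_vector_mul_assoc matrix_vector_mult_add_rdistrib)
  also have "\<dots> = (S ** matrix_inv S) *v (\<Theta> *v y)"
    unfolding z_def by (rule matrix_vector_mul_assoc)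
  also have "\<dots> = \<Theta> *v y"
    using pd_mat_matrix_inv(1)[OF assms(2)] by (simp add: S_def)
  finally have "A *v (transpose A *v z) + B *v (transpose B *v z) = \<Theta> *v y" .
  then have "xi_map \<Theta> A B (xi_map_right_inverse \<Theta> A B y) = matrix_inv \<Theta> *v (\<Theta> *v y)"
    unfolding xi_map_def xi_map_right_inverse_def Let_def S_def[symmetric] z_def[symmetric]
    by (simp only: fst_conv snd_conv)
  also have "\<dots> = y"
    using pd_mat_matrix_inv(2)[OF assms(1)] by (simp add: matrix_vector_mul_assoc)
  finally show ?thesis .
qed

lemma inner_xi_map:
  "e \<bullet> xi_map \<Theta> A B (\<eta>, \<zeta>) = (transpose A *v (transpose (matrix_inv \<Theta>) *v e)) \<bullet> \<eta>
      + (transpose B *v (transpose (matrix_inv \<Theta>) *v e)) \<bullet> \<zeta>"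
  unfolding xi_map_def
  by (simp only: inner_matrix_vector_transpose[of e] inner_matrix_vector_transpose[of _ A]
      inner_matrix_vector_transpose[of _ B] inner_add_right fst_conv snd_conv)

lemma norm_transpose_mult_matrix_inv_le_1:
  fixes \<Theta> :: "real^'r^'r" and A :: "real^'n^'r"
  assumes pd: "pd_mat \<Theta>" and psd: "psd_mat (\<Theta> ** \<Theta> - A ** transpose A)" and "norm e = 1"
  shows "norm (transpose A *v (transpose (matrix_inv \<Theta>) *v e)) \<le> 1"
proof -
  define w where "w = transpose (matrix_inv \<Theta>) *v e"
  have "0 \<le> w \<bullet> ((\<Theta> ** \<Theta> - A ** transpose A) *v w)" using psd by (simp add: psd_mat_def)
  also have "\<dots> = (\<Theta> *v w) \<bullet> (\<Theta> *v w) - (transpose A *v w) \<bullet> (transpose A *v w)"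
    using pd by (simp add: matrix_vector_mult_diff_rdistrib matrix_vector_mul_assoc[symmetric]
        inner_diff_right inner_matrix_vector_transpose[of w] pd_mat_def)
  also have "\<Theta> *v w = e" unfolding w_def by (rule pd_mat_mult_transpose_matrix_inv[OF pd])
  finally have "norm (transpose A *v w)^2 \<le> 1^2"
    using \<open>norm e = 1\<close> by (simp add: power2_norm_eq_inner[symmetric])
  then show ?thesis unfolding w_def by (rule power2_le_imp_le) simp
qed

lemma transpose_mult_matrix_inv_nonzero:
  fixes \<Theta> :: "real^'r^'r" and A :: "real^'n^'r" and B :: "real^'m^'r"
  assumes pd: "pd_mat \<Theta>" and pdS: "pd_mat (A ** transpose A + B ** transpose B)" and "norm e = 1"
  shows "transpose A *v (transpose (matrix_inv \<Theta>) *v e) \<noteq> 0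
    \<or> transpose B *v (transpose (matrix_inv \<Theta>) *v e) \<noteq> 0"
proof (rule ccontr)
  define w where "w = transpose (matrix_inv \<Theta>) *v e"
  assume "\<not> ?thesis"
  then have "(A ** transpose A + B ** transpose B) *v w = 0"
    by (simp add: w_def matrix_vector_mult_add_rdistrib flip: matrix_vector_mul_assoc)
  moreover have "w \<noteq> 0"
    using pd_mat_mult_transpose_matrix_inv[OF pd, of e] \<open>norm e = 1\<close> by (auto simp: w_def)
  ultimately show False using pdS by (auto simp: pd_mat_def dest: spec[of _ w])
qed

lemma dens_measure_pair:
  fixes p :: "'a::euclidean_space \<Rightarrow> real" and q :: "'b::euclidean_space \<Rightarrow> real"
  assumes p: "prob_density p" and q: "prob_density q"
  shows "dens_measure p \<Otimes>\<^sub>M dens_measure q = dens_measure (\<lambda>w. p (fst w) * q (snd w))"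
proof -
  have [measurable]: "p \<in> borel_measurable borel" "q \<in> borel_measurable borel"
    using p q by (auto simp: prob_density_def)
  interpret Q: prob_space "dens_measure q" using prob_space_dens_measure[OF q] .
  have "dens_measure p \<Otimes>\<^sub>M dens_measure q
      = density (lborel \<Otimes>\<^sub>M lborel) (\<lambda>(x, y). ennreal (p x) * ennreal (q y))"
    unfolding dens_measure_def
    using Q.sigma_finite_measure_axioms
    by (intro pair_measure_density) (auto simp: dens_measure_def lborel.sigma_finite_measure_axioms)
  also have "\<dots> = dens_measure (\<lambda>w. p (fst w) * q (snd w))"
    unfolding dens_measure_def lborel_prod[symmetric] using p q
    by (intro density_cong) (auto simp: ennreal_mult prob_density_def borel_prod[symmetric])
  finally show ?thesis .
qed

lemma even_prob_density_pair:
  fixes p :: "'a::euclidean_space \<Rightarrow> real" and q :: "'b::euclidean_space \<Rightarrow> real"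
  assumes p: "even_prob_density p" and q: "even_prob_density q"
  shows "even_prob_density (\<lambda>w. p (fst w) * q (snd w))"
proof -
  have pd: "prob_density p" "prob_density q"
    using p q by (simp_all add: even_prob_density_prob_density)
  interpret pair_prob_space "dens_measure p" "dens_measure q"
    using prob_space_dens_measure[OF pd(1)] prob_space_dens_measure[OF pd(2)]
    by (simp add: pair_prob_space_def pair_sigma_finite_def prob_space_imp_sigma_finite)
  have "(\<lambda>w. p (fst w) * q (snd w)) \<in> borel_measurable (borel :: ('a \<times> 'b) measure)"
    using even_prob_density_measurable[OF p] even_prob_density_measurable[OF q]
    by (simp add: borel_prod[symmetric])
  then have "prob_density (\<lambda>w. p (fst w) * q (snd w))"
    using prob_space_axioms dens_measure_pair[OF pd]
    by (intro prob_densityI) (auto simp: even_prob_density_nonneg[OF p] even_prob_density_nonneg[OF q])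
  then show ?thesis
    using even_prob_density_even[OF p] even_prob_density_even[OF q]
    by (simp add: even_prob_density_def)
qed

lemma law_xi_eq_distr_xi_map:
  "law_xi \<Theta> A B p q = distr (dens_measure p \<Otimes>\<^sub>M dens_measure q) lborel (xi_map \<Theta> A B)"
  unfolding law_xi_def xi_map_def by (simp add: case_prod_beta')

lemma distr_pair_inner_add:
  fixes p :: "'a::euclidean_space \<Rightarrow> real" and q :: "'b::euclidean_space \<Rightarrow> real"
  assumes p: "prob_density p" and q: "prob_density q"
  shows "distr (dens_measure p \<Otimes>\<^sub>M dens_measure q) lborel (\<lambda>w. a \<bullet> fst w + b \<bullet> snd w)
       = (distr (dens_measure p) lborel (\<lambda>x. a \<bullet> x) \<star> distr (dens_measure q) lborel (\<lambda>y. b \<bullet> y))"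
proof -
  interpret Q: prob_space "dens_measure q" using prob_space_dens_measure[OF q] .
  have "sigma_finite_measure (distr (dens_measure q) lborel (\<lambda>y. b \<bullet> y))"
    by (intro prob_space_imp_sigma_finite Q.prob_space_distr) simp
  then have "(distr (dens_measure p) lborel (\<lambda>x. a \<bullet> x) \<star> distr (dens_measure q) lborel (\<lambda>y. b \<bullet> y))
     = distr (distr (dens_measure p \<Otimes>\<^sub>M dens_measure q) (lborel \<Otimes>\<^sub>M lborel)
         (\<lambda>(x, y). (a \<bullet> x, b \<bullet> y))) borel (\<lambda>(x, y). x + y)"
    unfolding convolution_def by (subst pair_measure_distr) simp_all
  also have "\<dots> = distr (dens_measure p \<Otimes>\<^sub>M dens_measure q) borel
      ((\<lambda>(x, y). x + y) \<circ> (\<lambda>(x, y). (a \<bullet> x, b \<bullet> y)))"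
    by (rule distr_distr) measurable
  also have "\<dots> = distr (dens_measure p \<Otimes>\<^sub>M dens_measure q) lborel (\<lambda>w. a \<bullet> fst w + b \<bullet> snd w)"
    by (rule distr_cong) auto
  finally show ?thesis ..
qed

lemma
  fixes p :: "'a::euclidean_space \<Rightarrow> real"
  assumes "even_prob_density p"
  shows prob_space_distr_inner: "prob_space (distr (dens_measure p) lborel (\<lambda>x. a \<bullet> x))"
    and distr_uminus_distr_inner:
      "distr (distr (dens_measure p) lborel (\<lambda>x. a \<bullet> x)) borel uminus
        = distr (dens_measure p) lborel (\<lambda>x. a \<bullet> x)"
proof -
  interpret prob_space "dens_measure p"
    using prob_space_dens_measure[OF even_prob_density_prob_density[OF assms]] .
  show "prob_space (distr (dens_measure p) lborel (\<lambda>x. a \<bullet> x))"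
    by (rule prob_space_distr) simp
  have "distr (dens_measure p) lborel (\<lambda>x. a \<bullet> x) = distr (dens_measure p) borel (\<lambda>x. a \<bullet> x)"
    by (rule distr_cong) auto
  then show "distr (distr (dens_measure p) lborel (\<lambda>x. a \<bullet> x)) borel uminus
      = distr (dens_measure p) lborel (\<lambda>x. a \<bullet> x)"
    using distr_uminus_distr_linear[OF distr_uminus_dens_measure[OF assms], of "\<lambda>x. a \<bullet> x"]
    by (simp add: bounded_linear.linear[OF bounded_linear_inner_right])
qed

lemma measure_halfspace_eq_distr_inner:
  fixes e :: "'a::euclidean_space"
  assumes "sets M = sets borel"
  shows "measure M {x. \<delta> \<le> e \<bullet> x} = measure (distr M lborel (\<lambda>x. e \<bullet> x)) {\<delta>..}"
proof -
  have "(\<lambda>x. e \<bullet> x) \<in> borel_measurable M"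
    using linear_measurable[OF bounded_linear.linear[OF bounded_linear_inner_right], of e]
    by (simp add: measurable_cong_sets[OF assms refl])
  then have "measure (distr M lborel (\<lambda>x. e \<bullet> x)) {\<delta>..} = measure M ((\<lambda>x. e \<bullet> x) -` {\<delta>..} \<inter> space M)"
    by (intro measure_distr) auto
  also have "(\<lambda>x. e \<bullet> x) -` {\<delta>..} \<inter> space M = {x. \<delta> \<le> e \<bullet> x}"
    using sets_eq_imp_space_eq[OF assms] by auto
  finally show ?thesis ..
qed

lemma distr_inner_law_xi:
  fixes p :: "real^'n \<Rightarrow> real" and q :: "real^'m \<Rightarrow> real"
  assumes p: "prob_density p" and q: "prob_density q"
  shows "distr (law_xi \<Theta> A B p q) lborel (\<lambda>x. e \<bullet> x)
     = (distr (dens_measure p) lborel (\<lambda>x. (transpose A *v (transpose (matrix_inv \<Theta>) *v e)) \<bullet> x)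
        \<star> distr (dens_measure q) lborel (\<lambda>y. (transpose B *v (transpose (matrix_inv \<Theta>) *v e)) \<bullet> y))"
proof -
  have [measurable]: "xi_map \<Theta> A B \<in> borel_measurable borel"
    by (rule linear_measurable[OF linear_xi_map])
  have "distr (law_xi \<Theta> A B p q) lborel (\<lambda>x. e \<bullet> x)
      = distr (dens_measure p \<Otimes>\<^sub>M dens_measure q) lborel ((\<lambda>x. e \<bullet> x) \<circ> xi_map \<Theta> A B)"
    unfolding law_xi_eq_distr_xi_map by (subst distr_distr) (auto simp: dens_measure_pair[OF p q])
  also have "\<dots> = distr (dens_measure p \<Otimes>\<^sub>M dens_measure q) lborel
      (\<lambda>w. (transpose A *v (transpose (matrix_inv \<Theta>) *v e)) \<bullet> fst w
         + (transpose B *v (transpose (matrix_inv \<Theta>) *v e)) \<bullet> snd w)"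
    by (intro distr_cong) (auto simp flip: inner_xi_map)
  finally show ?thesis
    by (simp only: distr_pair_inner_add[OF p q])
qed

lemma measure_distr_inner_atLeast_le_tail:
  fixes p :: "real^'n \<Rightarrow> real"
  assumes p: "p \<in> subspherical \<mu>" and \<mu>: "nice \<mu>" and "norm a \<le> 1"
    and "0 \<le> s" and "a \<noteq> 0 \<or> 0 < s"
  shows "measure (distr (dens_measure p) lborel (\<lambda>x. a \<bullet> x)) {s..} \<le> tail \<mu> s"
proof (cases "a = 0")
  case True
  with assms have "{x. s \<le> a \<bullet> x} = {}" by auto
  then show ?thesis
    using tail_eq_measure[OF nice_prob_density[OF \<mu>], of s]
    by (simp add: measure_halfspace_eq_distr_inner[symmetric])
next
  case False
  then have "0 < norm a" by simp
  define e where "e = a /\<^sub>R norm a"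
  have "norm e = 1" using False by (simp add: e_def)
  have "{x. s \<le> a \<bullet> x} = {x. s / norm a \<le> e \<bullet> x}"
    using \<open>0 < norm a\<close> by (auto simp: e_def field_simps)
  then have "measure (dens_measure p) {x. s \<le> a \<bullet> x} \<le> tail \<mu> (s / norm a)"
    using p \<open>norm e = 1\<close> \<open>0 \<le> s\<close> \<open>0 < norm a\<close> by (auto simp: subspherical_def)
  also have "\<dots> \<le> tail \<mu> s"
    using assms \<open>0 < norm a\<close>
    by (intro tail_antimono[OF nice_prob_density[OF \<mu>]]) (simp add: le_divide_eq mult_left_le)
  finally show ?thesis
    by (simp add: measure_halfspace_eq_distr_inner)
qed

lemma nice_scale:
  assumes f: "nice f" and c: "0 < c"
  shows "distr (dens_measure f) lborel (\<lambda>t. c * t) = dens_measure (\<lambda>t. f (t / c) / c)"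
    and "nice (\<lambda>t. f (t / c) / c)"
proof -
  have [measurable]: "f \<in> borel_measurable borel" using nice_measurable[OF f] .
  interpret F: prob_space "dens_measure f" using prob_space_dens_measure[OF nice_prob_density[OF f]] .
  show eq: "distr (dens_measure f) lborel (\<lambda>t. c * t) = dens_measure (\<lambda>t. f (t / c) / c)"
  proof (rule measure_eqI)
    fix A assume "A \<in> sets (distr (dens_measure f) lborel (\<lambda>t. c * t))"
    then have [measurable]: "A \<in> sets borel" by simp
    have [measurable]: "(\<lambda>t. c * t) -` A \<in> sets borel"
      using measurable_sets_borel[of "\<lambda>t. c * t" borel A] by simp
    have "emeasure (distr (dens_measure f) lborel (\<lambda>t. c * t)) A
        = emeasure (dens_measure f) ((\<lambda>t. c * t) -` A \<inter> space (dens_measure f))"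
      by (rule emeasure_distr) auto
    also have "\<dots> = (\<integral>\<^sup>+x. ennreal (f x) * indicator ((\<lambda>t. c * t) -` A \<inter> space (dens_measure f)) x \<partial>lborel)"
      unfolding dens_measure_def by (rule emeasure_density) (auto simp: dens_measure_def)
    also have "\<dots> = (\<integral>\<^sup>+x. ennreal (f x) * indicator A (c * x) \<partial>lborel)"
      by (intro nn_integral_cong) (simp add: indicator_def dens_measure_def)
    also have "\<dots> = (\<integral>\<^sup>+x. ennreal c * (ennreal (f ((0 + c * x) / c) / c) * indicator A (0 + c * x)) \<partial>lborel)"
    proof (intro nn_integral_cong)
      fix x
      have "ennreal c * ennreal (f x / c) = ennreal (f x)"
        using c nice_nonneg[OF f, of x] by (simp add: ennreal_mult[symmetric])
      then show "ennreal (f x) * indicator A (c * x)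
          = ennreal c * (ennreal (f ((0 + c * x) / c) / c) * indicator A (0 + c * x))"
        using c by (simp add: mult.assoc[symmetric])
    qed
    also have "\<dots> = ennreal c * (\<integral>\<^sup>+x. ennreal (f ((0 + c * x) / c) / c) * indicator A (0 + c * x) \<partial>lborel)"
      by (rule nn_integral_cmult) measurable
    also have "\<dots> = (\<integral>\<^sup>+t. ennreal (f (t / c) / c) * indicator A t \<partial>lborel)"
      using nn_integral_real_affine[of "\<lambda>t. ennreal (f (t / c) / c) * indicator A t" c 0] c by simp
    also have "\<dots> = emeasure (dens_measure (\<lambda>t. f (t / c) / c)) A"
      unfolding dens_measure_def by (rule emeasure_density[symmetric]) auto
    finally show "emeasure (distr (dens_measure f) lborel (\<lambda>t. c * t)) A
        = emeasure (dens_measure (\<lambda>t. f (t / c) / c)) A" .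
  qed (simp add: dens_measure_def)
  have ps: "prob_space (dens_measure (\<lambda>t. f (t / c) / c))"
    unfolding eq[symmetric] by (rule F.prob_space_distr) simp
  have pd: "prob_density (\<lambda>t. f (t / c) / c)"
    using ps c nice_nonneg[OF f] by (intro prob_densityI) (auto simp: dens_measure_def)
  have cf: "continuous_on UNIV f" using nice_continuous[OF f] .
  have cont: "continuous_on {0..} (\<lambda>t. f (t / c) / c)"
    using c by (intro continuous_intros continuous_on_compose2[OF cf]) auto
  have mono: "f (t / c) / c \<le> f (s / c) / c" if "0 \<le> s" "s \<le> t" for s t
  proof -
    have "f (t / c) \<le> f (s / c)" using f that c unfolding nice_def by (simp add: divide_right_mono)
    then show ?thesis using c by (simp add: divide_right_mono)
  qed
  show "nice (\<lambda>t. f (t / c) / c)"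
    unfolding nice_def even_prob_density_def
    using pd cont mono nice_even[OF f] by (auto simp: minus_divide_left[symmetric])
qed

lemma distr_inner_nice:
  fixes p :: "real^'n \<Rightarrow> real"
  assumes "completely_monotone \<mu> P" and "p \<in> P" and "a \<noteq> 0"
  shows "\<exists>k. nice k \<and> distr (dens_measure p) lborel (\<lambda>x. a \<bullet> x) = dens_measure k"
proof -
  define e where "e = a /\<^sub>R norm a"
  have na: "0 < norm a" using assms by simp
  have "norm e = 1" using assms by (simp add: e_def)
  then obtain f where f: "nice f" and fe: "distr (dens_measure p) lborel (\<lambda>x. e \<bullet> x) = dens_measure f"
    using assms unfolding completely_monotone_def by blast
  have "distr (dens_measure p) lborel (\<lambda>x. a \<bullet> x)
      = distr (dens_measure p) lborel ((\<lambda>t. norm a * t) \<circ> (\<lambda>x. e \<bullet> x))"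
    using na by (intro distr_cong) (auto simp: e_def)
  also have "\<dots> = distr (distr (dens_measure p) lborel (\<lambda>x. e \<bullet> x)) lborel (\<lambda>t. norm a * t)"
    by (subst distr_distr) auto
  also have "\<dots> = dens_measure (\<lambda>t. f (t / norm a) / norm a)"
    unfolding fe by (rule nice_scale(1)[OF f na])
  finally show ?thesis using nice_scale(2)[OF f na] by blast
qed

lemma distr_inner_zero:
  assumes "prob_density p"
  shows "distr (dens_measure p) lborel (\<lambda>x. 0 \<bullet> x) = return lborel 0"
proof -
  interpret prob_space "dens_measure p" using prob_space_dens_measure[OF assms] .
  show ?thesis by (simp add: distr_const)
qed

lemma measure_convolution_distr_inner_le_tail:
  fixes p :: "real^'n \<Rightarrow> real" and q :: "real^'m \<Rightarrow> real"
  assumes \<mu>: "nice \<mu>" and p: "p \<in> subspherical \<mu>" and "norm a \<le> 1"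
    and cm: "completely_monotone \<nu> Pm" and q: "q \<in> Pm" and "norm b \<le> 1"
    and "a \<noteq> 0 \<or> b \<noteq> 0" and "0 \<le> \<delta>"
  shows "measure (distr (dens_measure p) lborel (\<lambda>x. a \<bullet> x) \<star> distr (dens_measure q) lborel (\<lambda>y. b \<bullet> y))
    {\<delta>..} \<le> tail (conv \<mu> \<nu>) \<delta>"
proof -
  have \<nu>: "nice \<nu>" and q': "q \<in> subspherical \<nu>" using cm q by (auto simp: completely_monotone_def)
  have ep: "even_prob_density p" and eq: "even_prob_density q"
    using p q' by (simp_all add: subspherical_def)
  define X where "X = distr (dens_measure p) lborel (\<lambda>x. a \<bullet> x)"
  define Y where "Y = distr (dens_measure q) lborel (\<lambda>y. b \<bullet> y)"
  have X: "prob_space X" "sets X = sets borel" "distr X borel uminus = X"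
    using prob_space_distr_inner[OF ep] distr_uminus_distr_inner[OF ep] by (simp_all add: X_def)
  have tail_X: "measure X {s..} \<le> tail \<mu> s" if "0 < s" for s
    unfolding X_def using that \<open>norm a \<le> 1\<close> by (intro measure_distr_inner_atLeast_le_tail[OF p \<mu>]) auto
  show ?thesis
    unfolding X_def[symmetric] Y_def[symmetric]
  proof (cases "b = 0")
    case False
    then obtain k where k: "nice k" and Yk: "Y = dens_measure k"
      using distr_inner_nice[OF cm q] unfolding Y_def by blast
    have "measure (dens_measure k) {s..} \<le> tail \<nu> s" if "0 < s" for s
      unfolding Yk[symmetric] Y_def using that \<open>norm b \<le> 1\<close>
      by (intro measure_distr_inner_atLeast_le_tail[OF q' \<nu>]) auto
    with X \<mu> tail_X \<nu> k have "measure (X \<star> dens_measure k) {\<delta>..} \<le> tail (conv \<mu> \<nu>) \<delta>"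
      using \<open>0 \<le> \<delta>\<close> by (intro measure_convolution_atLeast_le_conv)
    then show "measure (X \<star> Y) {\<delta>..} \<le> tail (conv \<mu> \<nu>) \<delta>" by (simp add: Yk)
  next
    case True
    then have "a \<noteq> 0" using \<open>a \<noteq> 0 \<or> b \<noteq> 0\<close> by simp
    have "Y = return lborel 0"
      unfolding Y_def True by (rule distr_inner_zero[OF even_prob_density_prob_density[OF eq]])
    then have "measure (X \<star> Y) {\<delta>..} = measure X {\<delta>..}"
      using convolution_return_zero(1)[OF prob_space.finite_measure[OF X(1)] X(2)] by simp
    also have "\<dots> \<le> tail \<mu> \<delta>"
      unfolding X_def using \<open>a \<noteq> 0\<close> \<open>0 \<le> \<delta>\<close> \<open>norm a \<le> 1\<close>
      by (intro measure_distr_inner_atLeast_le_tail[OF p \<mu>]) auto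
    also have "\<dots> \<le> tail (conv \<mu> \<nu>) \<delta>"
      using \<mu> \<nu> \<open>0 \<le> \<delta>\<close> by (rule tail_le_tail_conv)
    finally show "measure (X \<star> Y) {\<delta>..} \<le> tail (conv \<mu> \<nu>) \<delta>" .
  qed
qed

lemma measure_law_xi_halfspace_le_tail:
  fixes p :: "real^'n \<Rightarrow> real" and q :: "real^'m \<Rightarrow> real"
    and A :: "real^'n^'r" and B :: "real^'m^'r" and \<Theta> :: "real^'r^'r"
  assumes \<mu>: "nice \<mu>" and p: "p \<in> subspherical \<mu>"
    and cm: "completely_monotone \<nu> Pm" and q: "q \<in> Pm"
    and \<Theta>: "pd_mat \<Theta>"
    and psdA: "psd_mat (\<Theta> ** \<Theta> - A ** transpose A)"
    and psdB: "psd_mat (\<Theta> ** \<Theta> - B ** transpose B)"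
    and pdAB: "pd_mat (A ** transpose A + B ** transpose B)"
    and e: "norm e = 1" and "0 \<le> \<delta>"
  shows "measure (law_xi \<Theta> A B p q) {x. \<delta> \<le> e \<bullet> x} \<le> tail (conv \<mu> \<nu>) \<delta>"
proof -
  have "prob_density p" "prob_density q"
    using p q cm by (auto simp: subspherical_def completely_monotone_def even_prob_density_prob_density)
  moreover have "sets (law_xi \<Theta> A B p q) = sets borel" by (simp add: law_xi_def)
  ultimately have "measure (law_xi \<Theta> A B p q) {x. \<delta> \<le> e \<bullet> x}
    = measure (distr (dens_measure p) lborel (\<lambda>x. (transpose A *v (transpose (matrix_inv \<Theta>) *v e)) \<bullet> x)
        \<star> distr (dens_measure q) lborel (\<lambda>y. (transpose B *v (transpose (matrix_inv \<Theta>) *v e)) \<bullet> y)) {\<delta>..}"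
    by (simp add: measure_halfspace_eq_distr_inner distr_inner_law_xi)
  also have "\<dots> \<le> tail (conv \<mu> \<nu>) \<delta>"
    using norm_transpose_mult_matrix_inv_le_1[OF \<Theta> psdA e] norm_transpose_mult_matrix_inv_le_1[OF \<Theta> psdB e]
      transpose_mult_matrix_inv_nonzero[OF \<Theta> pdAB e] \<open>0 \<le> \<delta>\<close>
    by (intro measure_convolution_distr_inner_le_tail[OF \<mu> p _ cm q]) auto
  finally show ?thesis .
qed

lemma law_xi_even_density:
  fixes p :: "real^'n \<Rightarrow> real" and q :: "real^'m \<Rightarrow> real"
    and A :: "real^'n^'r" and B :: "real^'m^'r" and \<Theta> :: "real^'r^'r"
  assumes p: "even_prob_density p" and q: "even_prob_density q"
    and "pd_mat \<Theta>" "pd_mat (A ** transpose A + B ** transpose B)"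
  shows "\<exists>g. even_prob_density g \<and> law_xi \<Theta> A B p q = dens_measure g"
  using distr_linear_even_density[OF even_prob_density_pair[OF p q] linear_xi_map
      linear_xi_map_right_inverse xi_map_right_inverse[OF assms(3,4)]]
  unfolding law_xi_eq_distr_xi_map
  by (simp add: dens_measure_pair even_prob_density_prob_density p q)

lemma distr_inner_law_xi_even_density:
  fixes p :: "real^'n \<Rightarrow> real" and q :: "real^'m \<Rightarrow> real"
    and A :: "real^'n^'r" and B :: "real^'m^'r" and \<Theta> :: "real^'r^'r"
  assumes p: "even_prob_density p" and q: "even_prob_density q"
    and \<Theta>: "pd_mat \<Theta>" and pdAB: "pd_mat (A ** transpose A + B ** transpose B)" and e: "norm e = 1"
  shows "\<exists>f. even_prob_density f \<and> distr (law_xi \<Theta> A B p q) lborel (\<lambda>x. e \<bullet> x) = dens_measure f"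
proof -
  have [measurable]: "xi_map \<Theta> A B \<in> borel_measurable borel"
    by (rule linear_measurable[OF linear_xi_map])
  have "linear (\<lambda>w. e \<bullet> xi_map \<Theta> A B w)"
    by (intro linearI)
      (simp_all add: linear_add[OF linear_xi_map] linear_scale[OF linear_xi_map] inner_add_right)
  moreover have "linear (\<lambda>t::real. xi_map_right_inverse \<Theta> A B (t *\<^sub>R e))"
    by (intro linearI) (simp_all add: linear_add[OF linear_xi_map_right_inverse]
        linear_scale[OF linear_xi_map_right_inverse] scaleR_add_left)
  moreover have "e \<bullet> xi_map \<Theta> A B (xi_map_right_inverse \<Theta> A B (t *\<^sub>R e)) = t" for t
    using xi_map_right_inverse[OF \<Theta> pdAB, of "t *\<^sub>R e"] e by (simp add: dot_square_norm)
  ultimately obtain f where "even_prob_density f"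
      "distr (dens_measure (\<lambda>w. p (fst w) * q (snd w))) lborel (\<lambda>w. e \<bullet> xi_map \<Theta> A B w) = dens_measure f"
    using distr_linear_even_density[OF even_prob_density_pair[OF p q]] by blast
  moreover have "distr (law_xi \<Theta> A B p q) lborel (\<lambda>x. e \<bullet> x)
      = distr (dens_measure (\<lambda>w. p (fst w) * q (snd w))) lborel ((\<lambda>x. e \<bullet> x) \<circ> xi_map \<Theta> A B)"
    unfolding law_xi_eq_distr_xi_map
    by (subst distr_distr) (auto simp: dens_measure_pair even_prob_density_prob_density p q)
  ultimately show ?thesis by (auto simp: o_def)
qed

lemma distr_inner_law_xi_nice:
  fixes p :: "real^'n \<Rightarrow> real" and q :: "real^'m \<Rightarrow> real"
    and A :: "real^'n^'r" and B :: "real^'m^'r" and \<Theta> :: "real^'r^'r"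
  assumes cmp: "completely_monotone \<mu> Pn" and cmq: "completely_monotone \<nu> Pm"
    and p: "p \<in> Pn" and q: "q \<in> Pm"
    and \<Theta>: "pd_mat \<Theta>" and pdAB: "pd_mat (A ** transpose A + B ** transpose B)" and e: "norm e = 1"
  shows "\<exists>f. nice f \<and> distr (law_xi \<Theta> A B p q) lborel (\<lambda>x. e \<bullet> x) = dens_measure f"
proof -
  have "even_prob_density p" "even_prob_density q"
    using cmp cmq p q by (auto simp: completely_monotone_def subspherical_def)
  then have pd: "prob_density p" "prob_density q"
    by (simp_all add: even_prob_density_prob_density)
  define a where "a = transpose A *v (transpose (matrix_inv \<Theta>) *v e)"
  define b where "b = transpose B *v (transpose (matrix_inv \<Theta>) *v e)"
  have ab: "a \<noteq> 0 \<or> b \<noteq> 0"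
    unfolding a_def b_def by (rule transpose_mult_matrix_inv_nonzero[OF \<Theta> pdAB e])
  define X where "X = distr (dens_measure p) lborel (\<lambda>x. a \<bullet> x)"
  define Y where "Y = distr (dens_measure q) lborel (\<lambda>x. b \<bullet> x)"
  have fin: "finite_measure X" "finite_measure Y"
    using prob_space_dens_measure[OF pd(1)] prob_space_dens_measure[OF pd(2)]
    by (auto simp: X_def Y_def intro!: prob_space.finite_measure prob_space.prob_space_distr)
  have law: "distr (law_xi \<Theta> A B p q) lborel (\<lambda>x. e \<bullet> x) = (X \<star> Y)"
    unfolding distr_inner_law_xi[OF pd] X_def Y_def a_def b_def ..
  consider "a = 0" "b \<noteq> 0" | "a \<noteq> 0" "b = 0" | "a \<noteq> 0" "b \<noteq> 0" using ab by blast
  then show ?thesis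
  proof cases
    case 1
    then obtain k where "nice k" "Y = dens_measure k"
      using distr_inner_nice[OF cmq q] unfolding Y_def by blast
    moreover have "X = return lborel 0" unfolding X_def \<open>a = 0\<close> by (rule distr_inner_zero[OF pd(1)])
    ultimately show ?thesis
      using law convolution_return_zero(2)[OF fin(2)] by (auto simp: Y_def)
  next
    case 2
    then obtain k where "nice k" "X = dens_measure k"
      using distr_inner_nice[OF cmp p] unfolding X_def by blast
    moreover have "Y = return lborel 0" unfolding Y_def \<open>b = 0\<close> by (rule distr_inner_zero[OF pd(2)])
    ultimately show ?thesis
      using law convolution_return_zero(1)[OF fin(1)] by (auto simp: X_def)
  next
    case 3
    then obtain kX kY where "nice kX" "X = dens_measure kX" "nice kY" "Y = dens_measure kY"
      using distr_inner_nice[OF cmp p] distr_inner_nice[OF cmq q] unfolding X_def Y_def by metis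
    then show ?thesis
      using law dens_measure_conv nice_conv nice_prob_density by metis
  qed
qed

theorem proposition2p4:
  fixes \<mu> \<nu> :: "real \<Rightarrow> real"
    and Pn :: "(real^'n \<Rightarrow> real) set" and Pm :: "(real^'m \<Rightarrow> real) set"
    and A :: "real^'n^'r" and B :: "real^'m^'r" and \<Theta> :: "real^'r^'r"
    and \<gamma> :: "real \<Rightarrow> real"
  assumes "nice \<mu>" and "nice \<nu>"
    and "Pn \<subseteq> subspherical \<mu>"
    and "completely_monotone \<nu> Pm"
    and "pd_mat \<Theta>"
    and "psd_mat (\<Theta> ** \<Theta> - A ** transpose A)"
    and "psd_mat (\<Theta> ** \<Theta> - B ** transpose B)"
    and "pd_mat (A ** transpose A + B ** transpose B)"
    and "\<gamma> = (\<lambda>s. LINT t|lborel. \<mu> (s - t) * \<nu> t)"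
  shows "nice \<gamma> \<and>
    (\<forall>p\<in>Pn. \<forall>q\<in>Pm.
       (\<forall>(e::real^'r) \<delta>. norm e = 1 \<longrightarrow> 0 \<le> \<delta> \<longrightarrow>
          measure (law_xi \<Theta> A B p q) {x. e \<bullet> x \<ge> \<delta>} \<le> tail \<gamma> \<delta>)
     \<and> (\<forall>e::real^'r. norm e = 1 \<longrightarrow>
          (\<exists>f. even_prob_density f \<and>
               distr (law_xi \<Theta> A B p q) lborel (\<lambda>x. e \<bullet> x) = dens_measure f))
     \<and> (\<exists>g\<in>subspherical \<gamma>. law_xi \<Theta> A B p q = dens_measure g))
    \<and> (completely_monotone \<mu> Pn \<longrightarrow>
        completely_monotone \<gamma>
          {g \<in> subspherical \<gamma>. \<exists>p\<in>Pn. \<exists>q\<in>Pm. law_xi \<Theta> A B p q = dens_measure g})"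
proof -
  have \<gamma>: "\<gamma> = conv \<mu> \<nu>" using assms(9) by (simp add: conv_def fun_eq_iff)
  have even: "even_prob_density p" "even_prob_density q" if "p \<in> Pn" "q \<in> Pm" for p q
    using assms(3,4) that by (auto simp: completely_monotone_def subspherical_def)
  have tail: "measure (law_xi \<Theta> A B p q) {x. e \<bullet> x \<ge> \<delta>} \<le> tail \<gamma> \<delta>"
    if "p \<in> Pn" "q \<in> Pm" "norm e = 1" "0 \<le> \<delta>" for p q e \<delta>
    unfolding \<gamma> using assms(1,3-8) that by (intro measure_law_xi_halfspace_le_tail) auto
  have "\<exists>g\<in>subspherical \<gamma>. law_xi \<Theta> A B p q = dens_measure g" if "p \<in> Pn" "q \<in> Pm" for p q
    using law_xi_even_density[OF even[OF that] assms(5,8)] tail[OF that]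
    by (fastforce simp: subspherical_def)
  moreover have "completely_monotone \<gamma>
      {g \<in> subspherical \<gamma>. \<exists>p\<in>Pn. \<exists>q\<in>Pm. law_xi \<Theta> A B p q = dens_measure g}"
    if "completely_monotone \<mu> Pn"
    using distr_inner_law_xi_nice[OF that assms(4) _ _ assms(5,8)] nice_conv[OF assms(1,2)]
    unfolding completely_monotone_def \<gamma> by fastforce
  moreover have "\<exists>f. even_prob_density f \<and> distr (law_xi \<Theta> A B p q) lborel (\<lambda>x. e \<bullet> x) = dens_measure f"
    if "p \<in> Pn" "q \<in> Pm" "norm e = 1" for p q e
    using distr_inner_law_xi_even_density[OF even[OF that(1,2)] assms(5,8) that(3)] .
  ultimately show ?thesis
    using nice_conv[OF assms(1,2)] tail unfolding \<gamma> by blast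
qed

end
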